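(* Let $\rho$ be an $N$-qubit density matrix. Let $O_1,\dots,O_L$ be Hermitian $N$-qubit observables, where each $O_l$ is localized to a subset $\mathsf K_l\subseteq\{1,\dots,N\}$ with $|\mathsf K_l|\le K$, i.e. $O_l=O_{l,\mathsf K_l}\otimes\mathbb I_{\neg\mathsf K_l}$, and assume $\mathrm{tr}(O_{l,\mathsf K_l}^2)\ge (5/9)^{|\mathsf K_l|}$ for all $l$. Fix $\epsilon,\delta\in(0,1)$. Let $\hat\sigma_1,\dots,\hat\sigma_M$ be independent SIC POVM classical shadows of $\rho$ (each from an independent copy of $\rho$) with $$M\ge \tfrac{8}{3}\,3^K\max_{1\le l\le L}\mathrm{tr}(O_{l,\mathsf K_l}^2)\,\log(2L/\delta)/\epsilon^2 .$$ Then with probability at least $1-\delta$, $$\max_{1\le l\le L}\Big|\frac1M\sum_{m=1}^M\mathrm{tr}(O_l\hat\sigma_m)-\mathrm{tr}(O_l\rho)\Big|\le\epsilon .$$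
   Context: Let $|\psi_1\rangle,\dots,|\psi_4\rangle\in\mathbb C^2$ be unit vectors forming a single-qubit SIC set, i.e. $|\langle\psi_i|\psi_j\rangle|^2=1/3$ for all $i\neq j$; then $\{\tfrac12|\psi_i\rangle\langle\psi_i|\}_{i=1}^4$ is a POVM. Performing this measurement on each qubit of an $N$-qubit state $\rho$ yields an outcome string $(i_1,\dots,i_N)\in\{1,2,3,4\}^N$ with probability $\Pr[i_1\cdots i_N\mid\rho]=2^{-N}\langle\psi_{i_1}\otimes\cdots\otimes\psi_{i_N}|\,\rho\,|\psi_{i_1}\otimes\cdots\otimes\psi_{i_N}\rangle$. The SIC POVM classical shadow associated with this outcome is $\hat\sigma=\bigotimes_{n=1}^N\big(3|\psi_{i_n}\rangle\langle\psi_{i_n}|-\mathbb I\big)$. $\log$ is the natural logarithm. *)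

theory Defs
  imports "HOL-Analysis.Analysis"
begin

text \<open>N-qubit operators are represented as complex matrices indexed by computational
basis labels.  A basis label for the qubits in a set S of qubit positions is an
extensional function S \<rightarrow>E bool (value undefined outside S).  The whole register
is S = {0..<N}; a local operator on qubits K is indexed by basis labels of K.\<close>

type_synonym qop = "(nat \<Rightarrow> bool) \<Rightarrow> (nat \<Rightarrow> bool) \<Rightarrow> complex"

definition qbasis :: "nat set \<Rightarrow> (nat \<Rightarrow> bool) set" where
  "qbasis S = S \<rightarrow>\<^sub>E (UNIV :: bool set)"

definition qtrace :: "nat set \<Rightarrow> qop \<Rightarrow> complex" where
  "qtrace S A = (\<Sum>x\<in>qbasis S. A x x)"

definition qmult :: "nat set \<Rightarrow> qop \<Rightarrow> qop \<Rightarrow> qop" where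
  "qmult S A B = (\<lambda>x y. \<Sum>z\<in>qbasis S. A x z * B z y)"

definition hermitian_on :: "nat set \<Rightarrow> qop \<Rightarrow> bool" where
  "hermitian_on S A \<longleftrightarrow> (\<forall>x\<in>qbasis S. \<forall>y\<in>qbasis S. A x y = cnj (A y x))"

definition psd_on :: "nat set \<Rightarrow> qop \<Rightarrow> bool" where
  "psd_on S A \<longleftrightarrow> (\<forall>v :: (nat \<Rightarrow> bool) \<Rightarrow> complex.
      let q = (\<Sum>x\<in>qbasis S. \<Sum>y\<in>qbasis S. cnj (v x) * A x y * v y)
      in Im q = 0 \<and> Re q \<ge> 0)"

definition density_matrix :: "nat \<Rightarrow> qop \<Rightarrow> bool" where
  "density_matrix N \<rho> \<longleftrightarrow> hermitian_on {0..<N} \<rho> \<and> psd_on {0..<N} \<rho> \<and> qtrace {0..<N} \<rho> = 1"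

text \<open>O_K \<otimes> I on the complement of K within N qubits.\<close>
definition extend_local :: "nat \<Rightarrow> nat set \<Rightarrow> qop \<Rightarrow> qop" where
  "extend_local N K A = (\<lambda>x y. if (\<forall>i\<in>{0..<N} - K. x i = y i)
       then A (restrict x K) (restrict y K) else 0)"

text \<open>Single-qubit SIC set \<psi> 0, ..., \<psi> 3 (the paper's \<psi>_1..\<psi>_4), vectors in C^2 indexed by bool.\<close>
definition is_qubit_SIC :: "(nat \<Rightarrow> bool \<Rightarrow> complex) \<Rightarrow> bool" where
  "is_qubit_SIC \<psi> \<longleftrightarrow>
     (\<forall>i<4. (\<Sum>b\<in>UNIV. (cmod (\<psi> i b))\<^sup>2) = 1) \<and>
     (\<forall>i<4. \<forall>j<4. i \<noteq> j \<longrightarrow> (cmod (\<Sum>b\<in>UNIV. cnj (\<psi> i b) * \<psi> j b))\<^sup>2 = 1/3)"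

definition outcome_strings :: "nat \<Rightarrow> (nat \<Rightarrow> nat) set" where
  "outcome_strings N = {0..<N} \<rightarrow>\<^sub>E {0..<4}"

definition product_vec :: "(nat \<Rightarrow> bool \<Rightarrow> complex) \<Rightarrow> nat \<Rightarrow> (nat \<Rightarrow> nat) \<Rightarrow> (nat \<Rightarrow> bool) \<Rightarrow> complex" where
  "product_vec \<psi> N s = (\<lambda>x. \<Prod>n<N. \<psi> (s n) (x n))"

definition outcome_prob :: "(nat \<Rightarrow> bool \<Rightarrow> complex) \<Rightarrow> nat \<Rightarrow> qop \<Rightarrow> (nat \<Rightarrow> nat) \<Rightarrow> real" where
  "outcome_prob \<psi> N \<rho> s = Re (\<Sum>x\<in>qbasis {0..<N}. \<Sum>y\<in>qbasis {0..<N}.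
       cnj (product_vec \<psi> N s x) * \<rho> x y * product_vec \<psi> N s y) / 2 ^ N"

definition sic_shadow :: "(nat \<Rightarrow> bool \<Rightarrow> complex) \<Rightarrow> nat \<Rightarrow> (nat \<Rightarrow> nat) \<Rightarrow> qop" where
  "sic_shadow \<psi> N s = (\<lambda>x y. \<Prod>n<N.
       3 * \<psi> (s n) (x n) * cnj (\<psi> (s n) (y n)) - (if x n = y n then 1 else 0))"

text \<open>Probability of an event E about the outcome strings of M independent
shadows (outcome of copy m is \<omega> m).\<close>
definition shadows_prob :: "(nat \<Rightarrow> bool \<Rightarrow> complex) \<Rightarrow> nat \<Rightarrow> qop \<Rightarrow> nat \<Rightarrow>
    ((nat \<Rightarrow> nat \<Rightarrow> nat) \<Rightarrow> bool) \<Rightarrow> real" where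
  "shadows_prob \<psi> N \<rho> M E =
     (\<Sum>\<omega>\<in>{0..<M} \<rightarrow>\<^sub>E outcome_strings N.
        if E \<omega> then (\<Prod>m<M. outcome_prob \<psi> N \<rho> (\<omega> m)) else 0)"

end

theory Submission
  imports Defs
begin

text \<open>For an observable \<open>O\<close> supported on \<open>K\<close>, one shadow yields the estimate
  \<open>tr(O \<sigma>) = tr(O\<^sub>K \<Otimes>\<^sub>n\<^sub>\<in>\<^sub>K \<sigma>\<^sub>n)\<close>, because every single-qubit shadow has unit trace.
  The SIC set is a 2-design; hence the single-qubit shadow inverts the measurement channel, so the
  estimate is unbiased, and the correlation \<open>\<Sum>\<^sub>i \<sigma>\<^sub>i \<otimes> conj \<sigma>\<^sub>i\<close> is diagonal in the Pauli
  basis with eigenvalues 1 and 3. As every outcome string on \<open>K\<close> has probability at most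
  \<open>2\<^bsup>-|K|\<^esup>\<close>, Parseval in the Pauli basis bounds the second moment by
  \<open>2\<^bsup>-|K|\<^esup> 3\<^bsup>|K|\<^esup> 2\<^bsup>|K|\<^esup> tr O\<^sup>2 = 3\<^bsup>|K|\<^esup> tr O\<^sup>2\<close>, and Cauchy--Schwarz bounds the estimate by
  \<open>\<surd>(5\<^bsup>|K|\<^esup> tr O\<^sup>2)\<close>. Bernstein's inequality for the mean of \<open>M\<close> independent shadows then puts
  each two-sided tail below \<open>\<delta>/L\<close>, and a union bound over the \<open>L\<close> observables concludes.\<close>

section \<open>Single-qubit SIC identities\<close>

definition kdelta :: "'a \<Rightarrow> 'a \<Rightarrow> complex" where
  "kdelta a b = (if a = b then 1 else 0)"

lemma sum_UNIV_bool: "(\<Sum>b\<in>UNIV. f b) = f True + f False"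
  by (simp add: UNIV_bool add.commute)

lemma sum_lessThan_4: "(\<Sum>i<4::nat. f i) = f 0 + f 1 + f 2 + f 3"
  by (simp add: eval_nat_numeral)

lemma sic_unit_norm:
  assumes sic: "is_qubit_SIC \<psi>" and i: "i < 4"
  shows "\<psi> i True * cnj (\<psi> i True) + \<psi> i False * cnj (\<psi> i False) = 1"
proof -
  have "(\<Sum>b\<in>UNIV. (cmod (\<psi> i b))\<^sup>2) = 1" using sic i unfolding is_qubit_SIC_def by blast
  then have "complex_of_real (\<Sum>b\<in>UNIV. (cmod (\<psi> i b))\<^sup>2) = 1" by simp
  then have "(\<Sum>b\<in>UNIV. \<psi> i b * cnj (\<psi> i b)) = 1" by (simp only: of_real_sum complex_norm_square)
  then show ?thesis by (simp add: sum_UNIV_bool)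
qed

lemma sic_overlap_sq:
  assumes sic: "is_qubit_SIC \<psi>" and ij: "i < 4" "j < 4"
  shows "(\<Sum>a\<in>UNIV. \<psi> i a * cnj (\<psi> j a)) * cnj (\<Sum>a\<in>UNIV. \<psi> i a * cnj (\<psi> j a))
       = (if i = j then 1 else 1/3)"
proof (cases "i = j")
  case True
  then show ?thesis using sic_unit_norm[OF sic ij(1)] by (simp add: sum_UNIV_bool)
next
  case False
  define G where "G = (\<Sum>a\<in>UNIV. \<psi> i a * cnj (\<psi> j a))"
  have "(cmod (\<Sum>b\<in>UNIV. cnj (\<psi> i b) * \<psi> j b))\<^sup>2 = 1/3"
    using sic ij False unfolding is_qubit_SIC_def by blast
  moreover have "(\<Sum>b\<in>UNIV. cnj (\<psi> i b) * \<psi> j b) = cnj G" unfolding G_def by (simp add: sum_UNIV_bool)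
  ultimately have "(cmod G)\<^sup>2 = 1/3" by simp
  then have "complex_of_real ((cmod G)\<^sup>2) = complex_of_real (1/3)" by (rule arg_cong)
  then show ?thesis using False unfolding G_def[symmetric] by (simp only: complex_norm_square) simp
qed

definition sic_moment4 :: "(nat \<Rightarrow> bool \<Rightarrow> complex) \<Rightarrow> bool \<Rightarrow> bool \<Rightarrow> bool \<Rightarrow> bool \<Rightarrow> complex" where
  "sic_moment4 \<psi> a b c d = (\<Sum>i<4. \<psi> i a * cnj (\<psi> i b) * \<psi> i c * cnj (\<psi> i d))"

lemma sic_moment4_frame_potential:
  assumes sic: "is_qubit_SIC \<psi>"
  shows "(\<Sum>a\<in>UNIV. \<Sum>b\<in>UNIV. \<Sum>c\<in>UNIV. \<Sum>d\<in>UNIV.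
           sic_moment4 \<psi> a b c d * cnj (sic_moment4 \<psi> a b c d)) = 16/3"
proof -
  define m where "m i a b c d = \<psi> i a * cnj (\<psi> i b) * \<psi> i c * cnj (\<psi> i d)" for i a b c d
  define G where "G i j = (\<Sum>a\<in>UNIV. \<psi> i a * cnj (\<psi> j a))" for i j
  have overlap: "(\<Sum>a\<in>UNIV. \<Sum>b\<in>UNIV. \<Sum>c\<in>UNIV. \<Sum>d\<in>UNIV. m i a b c d * cnj (m j a b c d))
      = (G i j * cnj (G i j))\<^sup>2" for i j
    unfolding m_def G_def by (simp add: sum_UNIV_bool algebra_simps power2_eq_square)
  have "(\<Sum>a\<in>UNIV. \<Sum>b\<in>UNIV. \<Sum>c\<in>UNIV. \<Sum>d\<in>UNIV.
           sic_moment4 \<psi> a b c d * cnj (sic_moment4 \<psi> a b c d))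
      = (\<Sum>i<4. \<Sum>j<4. \<Sum>a\<in>UNIV. \<Sum>b\<in>UNIV. \<Sum>c\<in>UNIV. \<Sum>d\<in>UNIV. m i a b c d * cnj (m j a b c d))"
    unfolding sic_moment4_def m_def[symmetric] by (simp add: sum_UNIV_bool sum_product sum.distrib)
  also have "\<dots> = 16/3"
    unfolding overlap G_def using sic_overlap_sq[OF sic] by (simp add: sum_lessThan_4 power2_eq_square)
  finally show ?thesis .
qed

lemma sic_moment4_swap_overlap:
  assumes sic: "is_qubit_SIC \<psi>"
  shows "(\<Sum>a\<in>UNIV. \<Sum>b\<in>UNIV. \<Sum>c\<in>UNIV. \<Sum>d\<in>UNIV.
           (kdelta a b * kdelta c d + kdelta a d * kdelta c b) * sic_moment4 \<psi> a b c d) = 8"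
proof -
  have "(\<Sum>a\<in>UNIV. \<Sum>b\<in>UNIV. \<Sum>c\<in>UNIV. \<Sum>d\<in>UNIV.
           (kdelta a b * kdelta c d + kdelta a d * kdelta c b) * sic_moment4 \<psi> a b c d)
      = (\<Sum>i<4. 2 * (\<psi> i True * cnj (\<psi> i True) + \<psi> i False * cnj (\<psi> i False))\<^sup>2)"
    unfolding sic_moment4_def kdelta_def
    by (simp add: sum_UNIV_bool sum_lessThan_4 algebra_simps power2_eq_square)
  also have "\<dots> = 8" using sic_unit_norm[OF sic] by (simp add: sum_lessThan_4)
  finally show ?thesis .
qed

text \<open>The SIC set attains the minimum 16/3 of the frame potential, which forces it to be a
  2-design: the deviation of its fourth moment from the symmetric (Haar) value has zero
  Hilbert--Schmidt norm.\<close>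

lemma sic_fourth_moment:
  assumes sic: "is_qubit_SIC \<psi>"
  shows "(\<Sum>i<4. \<psi> i a * cnj (\<psi> i b) * \<psi> i c * cnj (\<psi> i d))
     = 2/3 * (kdelta a b * kdelta c d + kdelta a d * kdelta c b)"
proof -
  define E where "E a b c d = kdelta a b * kdelta c d + kdelta a d * kdelta c b" for a b c d :: bool
  define D where "D a b c d = sic_moment4 \<psi> a b c d - 2/3 * E a b c d" for a b c d
  have E_real: "cnj (E a b c d) = E a b c d" for a b c d
    unfolding E_def kdelta_def by simp
  have swap: "(\<Sum>a\<in>UNIV. \<Sum>b\<in>UNIV. \<Sum>c\<in>UNIV. \<Sum>d\<in>UNIV. E a b c d * sic_moment4 \<psi> a b c d) = 8"
    using sic_moment4_swap_overlap[OF sic] unfolding E_def .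
  have swap_cnj: "(\<Sum>a\<in>UNIV. \<Sum>b\<in>UNIV. \<Sum>c\<in>UNIV. \<Sum>d\<in>UNIV.
      E a b c d * cnj (sic_moment4 \<psi> a b c d)) = 8"
    using arg_cong[OF swap, of cnj] by (simp add: E_real)
  have E_norm: "(\<Sum>a\<in>UNIV. \<Sum>b\<in>UNIV. \<Sum>c\<in>UNIV. \<Sum>d\<in>UNIV. E a b c d * E a b c d) = 12"
    unfolding E_def kdelta_def by (simp add: sum_UNIV_bool)
  have "(\<Sum>a\<in>UNIV. \<Sum>b\<in>UNIV. \<Sum>c\<in>UNIV. \<Sum>d\<in>UNIV. complex_of_real ((cmod (D a b c d))\<^sup>2))
      = (\<Sum>a\<in>UNIV. \<Sum>b\<in>UNIV. \<Sum>c\<in>UNIV. \<Sum>d\<in>UNIV. sic_moment4 \<psi> a b c d * cnj (sic_moment4 \<psi> a b c d))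
        - 2/3 * (\<Sum>a\<in>UNIV. \<Sum>b\<in>UNIV. \<Sum>c\<in>UNIV. \<Sum>d\<in>UNIV. E a b c d * cnj (sic_moment4 \<psi> a b c d))
        - 2/3 * (\<Sum>a\<in>UNIV. \<Sum>b\<in>UNIV. \<Sum>c\<in>UNIV. \<Sum>d\<in>UNIV. E a b c d * sic_moment4 \<psi> a b c d)
        + 4/9 * (\<Sum>a\<in>UNIV. \<Sum>b\<in>UNIV. \<Sum>c\<in>UNIV. \<Sum>d\<in>UNIV. E a b c d * E a b c d)"
    unfolding complex_norm_square D_def using E_real by (simp add: sum_UNIV_bool algebra_simps)
  also have "\<dots> = 0"
    unfolding sic_moment4_frame_potential[OF sic] swap_cnj swap E_norm by simp
  finally have "(\<Sum>a\<in>UNIV. \<Sum>b\<in>UNIV. \<Sum>c\<in>UNIV. \<Sum>d\<in>UNIV. (cmod (D a b c d))\<^sup>2) = 0"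
    by (simp only: of_real_sum[symmetric] of_real_eq_0_iff)
  then have "D a b c d = 0"
    by (cases a; cases b; cases c; cases d) (simp_all add: sum_UNIV_bool add_nonneg_eq_0_iff)
  then show ?thesis unfolding D_def E_def sic_moment4_def by simp
qed

lemma sic_resolution:
  assumes sic: "is_qubit_SIC \<psi>"
  shows "(\<Sum>i<4. \<psi> i a * cnj (\<psi> i b)) = 2 * kdelta a b"
proof -
  have "(\<Sum>i<4. \<psi> i a * cnj (\<psi> i b))
      = (\<Sum>i<4. \<psi> i a * cnj (\<psi> i b) * (\<psi> i True * cnj (\<psi> i True) + \<psi> i False * cnj (\<psi> i False)))"
    using sic_unit_norm[OF sic] by (simp add: sum_lessThan_4)
  also have "\<dots> = (\<Sum>i<4. \<psi> i a * cnj (\<psi> i b) * \<psi> i True * cnj (\<psi> i True))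
       + (\<Sum>i<4. \<psi> i a * cnj (\<psi> i b) * \<psi> i False * cnj (\<psi> i False))"
    by (simp add: sum_lessThan_4 algebra_simps)
  also have "\<dots> = 2 * kdelta a b" unfolding sic_fourth_moment[OF sic] by (simp add: kdelta_def)
  finally show ?thesis .
qed

lemma sic_resolution':
  assumes sic: "is_qubit_SIC \<psi>"
  shows "(\<Sum>i<4. cnj (\<psi> i a) * \<psi> i b) = 2 * kdelta a b"
  using sic_resolution[OF sic, of b a] by (simp add: mult.commute kdelta_def)

definition qubit_shadow :: "(nat \<Rightarrow> bool \<Rightarrow> complex) \<Rightarrow> nat \<Rightarrow> bool \<Rightarrow> bool \<Rightarrow> complex" where
  "qubit_shadow \<psi> i a b = 3 * \<psi> i a * cnj (\<psi> i b) - kdelta a b"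

lemma sic_shadow_eq_prod: "sic_shadow \<psi> N s x y = (\<Prod>n<N. qubit_shadow \<psi> (s n) (x n) (y n))"
  unfolding sic_shadow_def qubit_shadow_def kdelta_def by simp

lemma cnj_qubit_shadow: "cnj (qubit_shadow \<psi> i a b) = qubit_shadow \<psi> i b a"
  unfolding qubit_shadow_def kdelta_def by (simp add: mult.commute)

lemma qubit_shadow_trace:
  assumes sic: "is_qubit_SIC \<psi>" and i: "i < 4"
  shows "(\<Sum>b\<in>UNIV. qubit_shadow \<psi> i b b) = 1"
proof -
  have "(\<Sum>b\<in>UNIV. qubit_shadow \<psi> i b b)
      = 3 * (\<psi> i True * cnj (\<psi> i True) + \<psi> i False * cnj (\<psi> i False)) - 2"
    unfolding qubit_shadow_def kdelta_def by (simp add: sum_UNIV_bool algebra_simps)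
  then show ?thesis using sic_unit_norm[OF sic i] by simp
qed

lemma qubit_shadow_hs_norm:
  assumes sic: "is_qubit_SIC \<psi>" and i: "i < 4"
  shows "(\<Sum>a\<in>UNIV. \<Sum>b\<in>UNIV. (cmod (qubit_shadow \<psi> i a b))\<^sup>2) = 5"
proof -
  define n where "n = \<psi> i True * cnj (\<psi> i True) + \<psi> i False * cnj (\<psi> i False)"
  have "complex_of_real (\<Sum>a\<in>UNIV. \<Sum>b\<in>UNIV. (cmod (qubit_shadow \<psi> i a b))\<^sup>2)
      = (\<Sum>a\<in>UNIV. \<Sum>b\<in>UNIV. qubit_shadow \<psi> i a b * cnj (qubit_shadow \<psi> i a b))"
    by (simp only: of_real_sum complex_norm_square)
  also have "\<dots> = 9 * n\<^sup>2 - 6 * n + 2"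
    unfolding qubit_shadow_def kdelta_def n_def by (simp add: sum_UNIV_bool algebra_simps power2_eq_square)
  also have "\<dots> = 5" using sic_unit_norm[OF sic i] unfolding n_def by simp
  finally have "complex_of_real (\<Sum>a\<in>UNIV. \<Sum>b\<in>UNIV. (cmod (qubit_shadow \<psi> i a b))\<^sup>2)
      = complex_of_real 5" by (simp only: of_real_numeral)
  then show ?thesis by (simp only: of_real_eq_iff)
qed

text \<open>Entrywise form of \<open>\<Sum>\<^sub>i tr(E\<^sub>i X) \<sigma>\<^sub>i = X\<close> for \<open>X = |v\<rangle>\<langle>u|\<close>, with POVM
  elements \<open>E\<^sub>i = |\<psi>\<^sub>i\<rangle>\<langle>\<psi>\<^sub>i|/2\<close>: the shadow inverts the measurement channel.\<close>

lemma sic_shadow_reconstruction: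
  assumes sic: "is_qubit_SIC \<psi>"
  shows "(\<Sum>i<4. cnj (\<psi> i u) * \<psi> i v * qubit_shadow \<psi> i y x / 2) = kdelta u y * kdelta v x"
proof -
  have "(\<Sum>i<4. cnj (\<psi> i u) * \<psi> i v * qubit_shadow \<psi> i y x / 2)
     = 3/2 * (\<Sum>i<4. \<psi> i y * cnj (\<psi> i u) * \<psi> i v * cnj (\<psi> i x))
       - kdelta y x / 2 * (\<Sum>i<4. cnj (\<psi> i u) * \<psi> i v)"
    unfolding qubit_shadow_def
    by (simp add: sum_lessThan_4 algebra_simps add_divide_distrib diff_divide_distrib)
  also have "\<dots> = kdelta u y * kdelta v x"
    unfolding sic_fourth_moment[OF sic] sic_resolution'[OF sic] by (simp add: kdelta_def)
  finally show ?thesis .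
qed

definition pauli :: "nat \<Rightarrow> bool \<Rightarrow> bool \<Rightarrow> complex" where
  "pauli j a b = (if j = 0 then kdelta a b
     else if j = 1 then 1 - kdelta a b
     else if j = 2 then (if a = b then 0 else if a then \<i> else - \<i>)
     else (if a = b then (if a then 1 else -1) else 0))"

definition pauli_weight :: "nat \<Rightarrow> real" where
  "pauli_weight j = (if j = 0 then 1 else 3)"

lemma qubit_shadow_correlation:
  assumes sic: "is_qubit_SIC \<psi>"
  shows "(\<Sum>i<4. qubit_shadow \<psi> i p q * cnj (qubit_shadow \<psi> i r t))
       = (\<Sum>j<4. complex_of_real (pauli_weight j) * (pauli j p q * cnj (pauli j r t)))"
proof -
  have "(\<Sum>i<4. qubit_shadow \<psi> i p q * cnj (qubit_shadow \<psi> i r t))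
    = 9 * (\<Sum>i<4. \<psi> i p * cnj (\<psi> i q) * \<psi> i t * cnj (\<psi> i r))
      - 3 * kdelta t r * (\<Sum>i<4. \<psi> i p * cnj (\<psi> i q))
      - 3 * kdelta p q * (\<Sum>i<4. \<psi> i t * cnj (\<psi> i r)) + 4 * kdelta p q * kdelta t r"
    unfolding cnj_qubit_shadow unfolding qubit_shadow_def kdelta_def by (simp add: sum_lessThan_4 algebra_simps)
  also have "\<dots> = (\<Sum>j<4. complex_of_real (pauli_weight j) * (pauli j p q * cnj (pauli j r t)))"
    unfolding sic_fourth_moment[OF sic] sic_resolution[OF sic] sum_lessThan_4 pauli_weight_def pauli_def kdelta_def
    by (cases p; cases q; cases r; cases t) simp_all
  finally show ?thesis .
qed

lemma pauli_completeness: "(\<Sum>j<4. pauli j p q * cnj (pauli j r t)) = 2 * (kdelta p r * kdelta q t)"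
  unfolding sum_lessThan_4 pauli_def kdelta_def
  by (cases p; cases q; cases r; cases t) simp_all

definition qubit_perp :: "(bool \<Rightarrow> complex) \<Rightarrow> bool \<Rightarrow> complex" where
  "qubit_perp v b = (if b then - cnj (v False) else cnj (v True))"

lemma qubit_perp_completeness:
  assumes "v True * cnj (v True) + v False * cnj (v False) = 1"
  shows "cnj (v x) * v y + cnj (qubit_perp v x) * qubit_perp v y = kdelta x y"
  using assms unfolding qubit_perp_def kdelta_def
  by (cases x; cases y) (simp_all add: algebra_simps)

section \<open>Product bases of qubit registers\<close>

lemma finite_qbasis: "finite I \<Longrightarrow> finite (qbasis I)"
  unfolding qbasis_def by (simp add: finite_PiE)

lemma prod_kdelta:
  assumes "finite I" "x \<in> qbasis I" "y \<in> qbasis I"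
  shows "(\<Prod>n\<in>I. kdelta (x n) (y n)) = kdelta x y"
proof (cases "x = y")
  case True then show ?thesis by (simp add: kdelta_def)
next
  case False
  then obtain n where "n \<in> I" "x n \<noteq> y n"
    using assms(2,3) PiE_ext[of x I _ y] unfolding qbasis_def by blast
  then show ?thesis using False assms(1) by (simp add: kdelta_def prod_zero_iff) blast
qed

lemma sum_mult_kdelta:
  assumes "finite A" "y \<in> A"
  shows "(\<Sum>u\<in>A. f u * kdelta u y) = f y"
  using assms by (simp add: kdelta_def if_distrib[of "\<lambda>c. _ * c"] cong: if_cong)

lemma sum_PiE_prod_swap:
  fixes r :: "'x \<Rightarrow> 'y \<Rightarrow> complex"
  assumes "finite I" "\<And>n. n \<in> I \<Longrightarrow> finite (J n)"
  shows "(\<Sum>c\<in>PiE I J. \<Sum>x\<in>X. \<Sum>y\<in>Y. r x y * (\<Prod>n\<in>I. h n (c n) x y))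
       = (\<Sum>x\<in>X. \<Sum>y\<in>Y. r x y * (\<Prod>n\<in>I. \<Sum>j\<in>J n. h n j x y))"
proof -
  have "(\<Sum>c\<in>PiE I J. \<Sum>x\<in>X. \<Sum>y\<in>Y. r x y * (\<Prod>n\<in>I. h n (c n) x y))
      = (\<Sum>x\<in>X. \<Sum>y\<in>Y. \<Sum>c\<in>PiE I J. r x y * (\<Prod>n\<in>I. h n (c n) x y))"
    by (subst sum.swap) (simp only: sum.swap[of _ "PiE I J"])
  also have "\<dots> = (\<Sum>x\<in>X. \<Sum>y\<in>Y. r x y * (\<Prod>n\<in>I. \<Sum>j\<in>J n. h n j x y))"
    by (simp add: sum_distrib_left prod_sum_PiE[OF assms])
  finally show ?thesis .
qed

lemma sum_product_frame_expectation:
  fixes u :: "nat \<Rightarrow> nat \<Rightarrow> bool \<Rightarrow> complex" and \<rho> :: qop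
  assumes I: "finite I" and J: "\<And>n. n \<in> I \<Longrightarrow> finite (J n)"
    and C: "\<And>n a b. n \<in> I \<Longrightarrow> (\<Sum>j\<in>J n. cnj (u n j a) * u n j b) = C n * kdelta a b"
  shows "(\<Sum>c\<in>PiE I J. \<Sum>x\<in>qbasis I. \<Sum>y\<in>qbasis I.
            cnj (\<Prod>n\<in>I. u n (c n) (x n)) * \<rho> x y * (\<Prod>n\<in>I. u n (c n) (y n)))
       = (\<Prod>n\<in>I. C n) * (\<Sum>x\<in>qbasis I. \<rho> x x)"
proof -
  have "(\<Sum>c\<in>PiE I J. \<Sum>x\<in>qbasis I. \<Sum>y\<in>qbasis I.
            cnj (\<Prod>n\<in>I. u n (c n) (x n)) * \<rho> x y * (\<Prod>n\<in>I. u n (c n) (y n)))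
      = (\<Sum>c\<in>PiE I J. \<Sum>x\<in>qbasis I. \<Sum>y\<in>qbasis I.
            \<rho> x y * (\<Prod>n\<in>I. cnj (u n (c n) (x n)) * u n (c n) (y n)))"
    by (intro sum.cong refl) (simp add: prod.distrib mult_ac)
  also have "\<dots> = (\<Sum>x\<in>qbasis I. \<Sum>y\<in>qbasis I. \<rho> x y * (\<Prod>n\<in>I. \<Sum>j\<in>J n. cnj (u n j (x n)) * u n j (y n)))"
    by (rule sum_PiE_prod_swap[OF I J])
  also have "\<dots> = (\<Sum>x\<in>qbasis I. \<Sum>y\<in>qbasis I. (\<Prod>n\<in>I. C n) * \<rho> x y * kdelta y x)"
  proof (intro sum.cong refl)
    fix x y assume xy: "x \<in> qbasis I" "y \<in> qbasis I"
    have "(\<Prod>n\<in>I. \<Sum>j\<in>J n. cnj (u n j (x n)) * u n j (y n)) = (\<Prod>n\<in>I. C n * kdelta (x n) (y n))"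
      using C by (intro prod.cong) auto
    also have "\<dots> = (\<Prod>n\<in>I. C n) * kdelta x y" by (simp add: prod.distrib prod_kdelta[OF I xy])
    finally show "\<rho> x y * (\<Prod>n\<in>I. \<Sum>j\<in>J n. cnj (u n j (x n)) * u n j (y n))
        = (\<Prod>n\<in>I. C n) * \<rho> x y * kdelta y x"
      by (simp add: kdelta_def)
  qed
  also have "\<dots> = (\<Prod>n\<in>I. C n) * (\<Sum>x\<in>qbasis I. \<rho> x x)"
    by (simp add: sum_mult_kdelta finite_qbasis[OF I] sum_distrib_left)
  finally show ?thesis .
qed

definition qmerge :: "nat set \<Rightarrow> (nat \<Rightarrow> 'a) \<Rightarrow> (nat \<Rightarrow> 'a) \<Rightarrow> nat \<Rightarrow> 'a" where
  "qmerge K a c = (\<lambda>n. if n \<in> K then a n else c n)"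

lemma restrict_qmerge: "a \<in> qbasis K \<Longrightarrow> restrict (qmerge K a c) K = a"
  unfolding qbasis_def qmerge_def by (auto simp: restrict_def PiE_def extensional_def fun_eq_iff)

lemma sum_qbasis_split:
  assumes I: "finite I" and K: "K \<subseteq> I"
  shows "(\<Sum>x\<in>qbasis I. f x) = (\<Sum>a\<in>qbasis K. \<Sum>c\<in>qbasis (I - K). f (qmerge K a c))"
proof -
  have "(\<Sum>x\<in>qbasis I. f x) = (\<Sum>(a,c)\<in>qbasis K \<times> qbasis (I - K). f (qmerge K a c))"
    by (rule sum.reindex_bij_witness[of _ "\<lambda>(a,c). qmerge K a c" "\<lambda>x. (restrict x K, restrict x (I - K))"])
      (use K in \<open>auto simp: qbasis_def qmerge_def restrict_def PiE_def extensional_def fun_eq_iff intro!: arg_cong[where f = f]\<close>)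
  also have "\<dots> = (\<Sum>a\<in>qbasis K. \<Sum>c\<in>qbasis (I - K). f (qmerge K a c))"
    by (rule sum.cartesian_product[symmetric])
  finally show ?thesis .
qed

lemma qmerge_eq_iff:
  assumes "c \<in> qbasis J" "c' \<in> qbasis J" "J \<inter> K = {}"
  shows "(\<forall>i\<in>J. qmerge K a c i = qmerge K a' c' i) \<longleftrightarrow> c = c'"
  using assms PiE_ext[of c J _ c'] unfolding qbasis_def qmerge_def by (auto simp: disjoint_iff)

lemma sum_qbasis_prod:
  fixes h :: "nat \<Rightarrow> bool \<Rightarrow> 'a::comm_semiring_1"
  assumes K: "finite K"
  shows "(\<Sum>a\<in>qbasis K. \<Prod>n\<in>K. h n (a n)) = (\<Prod>n\<in>K. \<Sum>b\<in>UNIV. h n b)"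
  unfolding qbasis_def using prod_sum_PiE[OF K, of "\<lambda>_. UNIV" h] by simp

section \<open>Outcome distribution and unbiasedness\<close>

definition qform :: "nat set \<Rightarrow> qop \<Rightarrow> ((nat \<Rightarrow> bool) \<Rightarrow> complex) \<Rightarrow> complex" where
  "qform S A v = (\<Sum>x\<in>qbasis S. \<Sum>y\<in>qbasis S. cnj (v x) * A x y * v y)"

lemma psd_on_qform:
  assumes "psd_on S A"
  shows "qform S A v = complex_of_real (Re (qform S A v))" and "0 \<le> Re (qform S A v)"
proof -
  have "Im (qform S A v) = 0 \<and> 0 \<le> Re (qform S A v)"
    using assms unfolding psd_on_def qform_def Let_def by (rule allE[where x = v])
  then show "qform S A v = complex_of_real (Re (qform S A v))" and "0 \<le> Re (qform S A v)"
    by (simp_all add: complex_eq_iff)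
qed

lemma outcome_prob_eq_qform:
  "outcome_prob \<psi> N \<rho> s = Re (qform {0..<N} \<rho> (product_vec \<psi> N s)) / 2 ^ N"
  unfolding outcome_prob_def qform_def ..

lemma outcome_prob_nonneg: "density_matrix N \<rho> \<Longrightarrow> 0 \<le> outcome_prob \<psi> N \<rho> s"
  unfolding density_matrix_def outcome_prob_eq_qform by (simp add: psd_on_qform(2))

lemma of_real_outcome_prob:
  assumes "density_matrix N \<rho>"
  shows "complex_of_real (outcome_prob \<psi> N \<rho> s) = qform {0..<N} \<rho> (product_vec \<psi> N s) / 2 ^ N"
proof -
  have "psd_on {0..<N} \<rho>" using assms unfolding density_matrix_def by blast
  from psd_on_qform(1)[OF this, of "product_vec \<psi> N s"] show ?thesis
    unfolding outcome_prob_eq_qform by simp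
qed

lemma outcome_strings_PiE: "outcome_strings N = PiE {..<N} (\<lambda>_. {..<4})"
  unfolding outcome_strings_def by (simp only: atLeast0LessThan)

lemma finite_outcome_strings: "finite (outcome_strings N)"
  unfolding outcome_strings_def by (simp add: finite_PiE)

lemma density_matrix_trace: "density_matrix N \<rho> \<Longrightarrow> (\<Sum>x\<in>qbasis {..<N}. \<rho> x x) = 1"
  unfolding density_matrix_def qtrace_def atLeast0LessThan by simp

lemma outcome_prob_sum:
  assumes sic: "is_qubit_SIC \<psi>" and d: "density_matrix N \<rho>"
  shows "(\<Sum>s\<in>outcome_strings N. outcome_prob \<psi> N \<rho> s) = 1"
proof -
  have "(\<Sum>s\<in>outcome_strings N. qform {0..<N} \<rho> (product_vec \<psi> N s))
     = (\<Sum>c\<in>PiE {..<N} (\<lambda>_. {..<4}). \<Sum>x\<in>qbasis {..<N}. \<Sum>y\<in>qbasis {..<N}.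
            cnj (\<Prod>n\<in>{..<N}. (\<lambda>n j. \<psi> j) n (c n) (x n)) * \<rho> x y
            * (\<Prod>n\<in>{..<N}. (\<lambda>n j. \<psi> j) n (c n) (y n)))"
    unfolding qform_def outcome_strings_PiE product_vec_def atLeast0LessThan by simp
  also have "\<dots> = (\<Prod>n\<in>{..<N}. 2) * (\<Sum>x\<in>qbasis {..<N}. \<rho> x x)"
    by (rule sum_product_frame_expectation) (auto simp: sic_resolution'[OF sic])
  also have "\<dots> = 2 ^ N" using density_matrix_trace[OF d] by simp
  finally have "complex_of_real (\<Sum>s\<in>outcome_strings N. outcome_prob \<psi> N \<rho> s) = 1"
    by (simp add: of_real_outcome_prob[OF d] sum_divide_distrib[symmetric])
  then show ?thesis by (metis of_real_eq_1_iff)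
qed

lemma sic_shadow_unbiased_entry:
  assumes sic: "is_qubit_SIC \<psi>" and d: "density_matrix N \<rho>"
    and x: "x \<in> qbasis {0..<N}" and y: "y \<in> qbasis {0..<N}"
  shows "(\<Sum>s\<in>outcome_strings N. complex_of_real (outcome_prob \<psi> N \<rho> s) * sic_shadow \<psi> N s y x)
       = \<rho> y x"
proof -
  let ?B = "qbasis {..<N}"
  have summand: "complex_of_real (outcome_prob \<psi> N \<rho> s) * sic_shadow \<psi> N s y x
      = (\<Sum>u\<in>?B. \<Sum>v\<in>?B. \<rho> u v
          * (\<Prod>n\<in>{..<N}. cnj (\<psi> (s n) (u n)) * \<psi> (s n) (v n) * qubit_shadow \<psi> (s n) (y n) (x n) / 2))"
    for s
  proof -
    have "(\<Prod>n\<in>{..<N}. cnj (\<psi> (s n) (u n)) * \<psi> (s n) (v n) * qubit_shadow \<psi> (s n) (y n) (x n) / 2)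
        = cnj (\<Prod>n<N. \<psi> (s n) (u n)) * (\<Prod>n<N. \<psi> (s n) (v n))
          * (\<Prod>n<N. qubit_shadow \<psi> (s n) (y n) (x n)) / 2 ^ N" for u v
      by (simp add: prod.distrib prod_dividef)
    then show ?thesis
      unfolding of_real_outcome_prob[OF d] qform_def sic_shadow_eq_prod product_vec_def atLeast0LessThan
      by (simp add: sum_distrib_left sum_distrib_right sum_divide_distrib mult_ac)
  qed
  have "(\<Sum>s\<in>outcome_strings N. complex_of_real (outcome_prob \<psi> N \<rho> s) * sic_shadow \<psi> N s y x)
     = (\<Sum>u\<in>?B. \<Sum>v\<in>?B. \<rho> u v * (\<Prod>n\<in>{..<N}. \<Sum>j\<in>{..<4}.
          cnj (\<psi> j (u n)) * \<psi> j (v n) * qubit_shadow \<psi> j (y n) (x n) / 2))"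
    unfolding summand outcome_strings_PiE by (rule sum_PiE_prod_swap) auto
  also have "\<dots> = (\<Sum>u\<in>?B. \<Sum>v\<in>?B. \<rho> u v * kdelta v x * kdelta u y)"
    using x y unfolding atLeast0LessThan
    by (intro sum.cong refl) (simp add: sic_shadow_reconstruction[OF sic] prod.distrib prod_kdelta)
  also have "\<dots> = \<rho> y x"
    using x y unfolding atLeast0LessThan
    by (simp add: sum_mult_kdelta finite_qbasis sum_distrib_right[symmetric])
  finally show ?thesis .
qed

lemma sic_shadow_unbiased:
  assumes sic: "is_qubit_SIC \<psi>" and d: "density_matrix N \<rho>"
  shows "(\<Sum>s\<in>outcome_strings N. complex_of_real (outcome_prob \<psi> N \<rho> s)
            * qtrace {0..<N} (qmult {0..<N} A (sic_shadow \<psi> N s)))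
       = qtrace {0..<N} (qmult {0..<N} A \<rho>)"
proof -
  let ?B = "qbasis {0..<N}"
  define c where "c s = complex_of_real (outcome_prob \<psi> N \<rho> s)" for s
  have "(\<Sum>s\<in>outcome_strings N. c s * qtrace {0..<N} (qmult {0..<N} A (sic_shadow \<psi> N s)))
      = (\<Sum>x\<in>?B. \<Sum>z\<in>?B. A x z * (\<Sum>s\<in>outcome_strings N. c s * sic_shadow \<psi> N s z x))"
    unfolding qtrace_def qmult_def sum_distrib_left
    by (subst sum.swap, rule sum.cong[OF refl], subst sum.swap) (simp add: mult_ac)
  also have "\<dots> = (\<Sum>x\<in>?B. \<Sum>z\<in>?B. A x z * \<rho> z x)"
    unfolding c_def by (intro sum.cong refl) (simp add: sic_shadow_unbiased_entry[OF sic d])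
  finally show ?thesis unfolding c_def qtrace_def qmult_def .
qed

section \<open>Coefficients of an observable against product operators\<close>

definition tensor_coeff :: "nat set \<Rightarrow> qop \<Rightarrow> (nat \<Rightarrow> bool \<Rightarrow> bool \<Rightarrow> complex) \<Rightarrow> (nat \<Rightarrow> nat) \<Rightarrow> complex" where
  "tensor_coeff K Ob A t = qtrace K (qmult K Ob (\<lambda>x y. \<Prod>n\<in>K. A (t n) (x n) (y n)))"

lemma tensor_coeff_eq_sum:
  "tensor_coeff K Ob A t
     = (\<Sum>z\<in>qbasis K \<times> qbasis K. case_prod Ob z * (\<Prod>n\<in>K. A (t n) (snd z n) (fst z n)))"
  unfolding tensor_coeff_def qtrace_def qmult_def sum.cartesian_product
  by (intro sum.cong refl) (auto simp: case_prod_beta)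

lemma tensor_coeff_cong:
  assumes "\<And>n. n \<in> K \<Longrightarrow> s n = t n"
  shows "tensor_coeff K Ob A s = tensor_coeff K Ob A t"
proof -
  have "(\<lambda>x y. \<Prod>n\<in>K. A (s n) (x n) (y n)) = (\<lambda>x y. \<Prod>n\<in>K. A (t n) (x n) (y n))"
    using assms by (auto intro!: prod.cong)
  then show ?thesis unfolding tensor_coeff_def by simp
qed

lemma cnj_tensor_coeff:
  assumes Ob: "hermitian_on K Ob" and A: "\<And>j a b. cnj (A j a b) = A j b a"
  shows "cnj (tensor_coeff K Ob A t) = tensor_coeff K Ob A t"
proof -
  have cnj_O: "cnj (Ob a a') = Ob a' a" if "a \<in> qbasis K" "a' \<in> qbasis K" for a a'
  proof -
    have "Ob a' a = cnj (Ob a a')" using Ob that unfolding hermitian_on_def by blast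
    then show ?thesis by simp
  qed
  have "cnj (tensor_coeff K Ob A t)
      = (\<Sum>a\<in>qbasis K. \<Sum>a'\<in>qbasis K. Ob a' a * (\<Prod>n\<in>K. A (t n) (a n) (a' n)))"
    unfolding tensor_coeff_def qtrace_def qmult_def
    by (simp only: cnj_sum complex_cnj_mult cnj_prod A) (intro sum.cong refl; simp add: cnj_O)
  also have "\<dots> = tensor_coeff K Ob A t"
    unfolding tensor_coeff_def qtrace_def qmult_def by (rule sum.swap)
  finally show ?thesis .
qed

definition hs_norm_sq :: "nat set \<Rightarrow> qop \<Rightarrow> real" where
  "hs_norm_sq K Ob = (\<Sum>a\<in>qbasis K. \<Sum>a'\<in>qbasis K. (cmod (Ob a a'))\<^sup>2)"

lemma hs_norm_sq_eq_sum: "hs_norm_sq K Ob = (\<Sum>z\<in>qbasis K \<times> qbasis K. (cmod (case_prod Ob z))\<^sup>2)"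
  unfolding hs_norm_sq_def sum.cartesian_product by (intro sum.cong refl) (auto simp: case_prod_beta)

lemma hermitian_trace_square:
  assumes "hermitian_on K Ob"
  shows "Re (qtrace K (qmult K Ob Ob)) = hs_norm_sq K Ob"
proof -
  have "qtrace K (qmult K Ob Ob)
      = (\<Sum>a\<in>qbasis K. \<Sum>a'\<in>qbasis K. complex_of_real ((cmod (Ob a a'))\<^sup>2))"
    unfolding qtrace_def qmult_def complex_norm_square
  proof (intro sum.cong refl)
    fix a a' assume "a \<in> qbasis K" "a' \<in> qbasis K"
    then have "Ob a' a = cnj (Ob a a')" using assms unfolding hermitian_on_def by blast
    then show "Ob a a' * Ob a' a = Ob a a' * cnj (Ob a a')" by simp
  qed
  then show ?thesis unfolding hs_norm_sq_def by (simp add: Re_sum)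
qed

lemma norm_sum_mult_sq_le:
  fixes f g :: "'z \<Rightarrow> complex"
  shows "(cmod (\<Sum>z\<in>Z. f z * g z))\<^sup>2 \<le> (\<Sum>z\<in>Z. (cmod (f z))\<^sup>2) * (\<Sum>z\<in>Z. (cmod (g z))\<^sup>2)"
proof -
  have "cmod (\<Sum>z\<in>Z. f z * g z) \<le> (\<Sum>z\<in>Z. cmod (f z) * cmod (g z))"
    using norm_sum[of "\<lambda>z. f z * g z" Z] by (simp add: norm_mult)
  then have "(cmod (\<Sum>z\<in>Z. f z * g z))\<^sup>2 \<le> (\<Sum>z\<in>Z. cmod (f z) * cmod (g z))\<^sup>2"
    by (simp add: power_mono)
  also have "\<dots> \<le> (\<Sum>z\<in>Z. (cmod (f z))\<^sup>2) * (\<Sum>z\<in>Z. (cmod (g z))\<^sup>2)"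
    by (rule Cauchy_Schwarz_ineq_sum)
  finally show ?thesis .
qed

lemma norm_tensor_coeff_sq_le:
  assumes K: "finite K"
  shows "(cmod (tensor_coeff K Ob A t))\<^sup>2
       \<le> hs_norm_sq K Ob * (\<Prod>n\<in>K. \<Sum>a\<in>UNIV. \<Sum>b\<in>UNIV. (cmod (A (t n) a b))\<^sup>2)"
proof -
  have "(cmod (tensor_coeff K Ob A t))\<^sup>2
      \<le> hs_norm_sq K Ob * (\<Sum>z\<in>qbasis K \<times> qbasis K. (cmod (\<Prod>n\<in>K. A (t n) (snd z n) (fst z n)))\<^sup>2)"
    unfolding tensor_coeff_eq_sum hs_norm_sq_eq_sum by (rule norm_sum_mult_sq_le)
  also have "(\<Sum>z\<in>qbasis K \<times> qbasis K. (cmod (\<Prod>n\<in>K. A (t n) (snd z n) (fst z n)))\<^sup>2)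
      = (\<Sum>a\<in>qbasis K. \<Sum>a'\<in>qbasis K. \<Prod>n\<in>K. (cmod (A (t n) (a' n) (a n)))\<^sup>2)"
    unfolding sum.cartesian_product by (simp add: prod_norm[symmetric] prod_power_distrib case_prod_beta)
  also have "\<dots> = (\<Sum>a\<in>qbasis K. \<Prod>n\<in>K. \<Sum>a'\<in>UNIV. (cmod (A (t n) a' (a n)))\<^sup>2)"
    by (intro sum.cong refl) (rule sum_qbasis_prod[OF K])
  also have "\<dots> = (\<Prod>n\<in>K. \<Sum>b\<in>UNIV. \<Sum>a\<in>UNIV. (cmod (A (t n) a b))\<^sup>2)"
    by (rule sum_qbasis_prod[OF K])
  also have "\<dots> = (\<Prod>n\<in>K. \<Sum>a\<in>UNIV. \<Sum>b\<in>UNIV. (cmod (A (t n) a b))\<^sup>2)"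
    by (intro prod.cong refl) (rule sum.swap)
  finally show ?thesis .
qed

lemma norm_shadow_coeff_sq_le:
  assumes sic: "is_qubit_SIC \<psi>" and K: "finite K" and t: "\<And>n. n \<in> K \<Longrightarrow> t n < 4"
  shows "(cmod (tensor_coeff K Ob (qubit_shadow \<psi>) t))\<^sup>2 \<le> 5 ^ card K * hs_norm_sq K Ob"
proof -
  have "(\<Prod>n\<in>K. \<Sum>a\<in>UNIV. \<Sum>b\<in>UNIV. (cmod (qubit_shadow \<psi> (t n) a b))\<^sup>2) = (\<Prod>n\<in>K. 5)"
    by (rule prod.cong[OF refl]) (rule qubit_shadow_hs_norm[OF sic t])
  then show ?thesis
    using norm_tensor_coeff_sq_le[OF K, of Ob "qubit_shadow \<psi>" t] by (simp add: mult.commute)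
qed


lemma sum_weighted_tensor_coeff_sq:
  fixes w :: "nat \<Rightarrow> complex"
  assumes K: "finite K" and J: "finite J"
  shows "(\<Sum>t\<in>PiE K (\<lambda>_. J). (\<Prod>n\<in>K. w (t n)) * (tensor_coeff K Ob A t * cnj (tensor_coeff K Ob A t)))
    = (\<Sum>z\<in>qbasis K \<times> qbasis K. \<Sum>z'\<in>qbasis K \<times> qbasis K. case_prod Ob z * cnj (case_prod Ob z')
         * (\<Prod>n\<in>K. \<Sum>j\<in>J. w j * (A j (snd z n) (fst z n) * cnj (A j (snd z' n) (fst z' n)))))"
proof -
  let ?Z = "qbasis K \<times> qbasis K"
  have "(\<Prod>n\<in>K. w (t n)) * (tensor_coeff K Ob A t * cnj (tensor_coeff K Ob A t))
      = (\<Sum>z\<in>?Z. \<Sum>z'\<in>?Z. case_prod Ob z * cnj (case_prod Ob z')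
         * (\<Prod>n\<in>K. w (t n) * (A (t n) (snd z n) (fst z n) * cnj (A (t n) (snd z' n) (fst z' n)))))"
    for t
    unfolding tensor_coeff_eq_sum
    by (simp only: cnj_sum complex_cnj_mult cnj_prod sum_product)
      (simp add: sum_distrib_left prod.distrib mult_ac)
  then show ?thesis
    using sum_PiE_prod_swap[OF K J] by simp
qed

lemma sum_weighted_tensor_coeff_sq_eq:
  assumes K: "finite K" and J: "finite J"
    and corr: "\<And>a b c d. (\<Sum>j\<in>J. w j * (A j a b * cnj (A j c d)))
                       = (\<Sum>j\<in>J. w' j * (A' j a b * cnj (A' j c d)))"
  shows "(\<Sum>t\<in>PiE K (\<lambda>_. J). (\<Prod>n\<in>K. w (t n)) * (tensor_coeff K Ob A t * cnj (tensor_coeff K Ob A t)))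
       = (\<Sum>t\<in>PiE K (\<lambda>_. J). (\<Prod>n\<in>K. w' (t n)) * (tensor_coeff K Ob A' t * cnj (tensor_coeff K Ob A' t)))"
  unfolding sum_weighted_tensor_coeff_sq[OF K J] corr ..

lemma pauli_parseval:
  assumes K: "finite K"
  shows "(\<Sum>t\<in>PiE K (\<lambda>_. {..<4}). (cmod (tensor_coeff K Ob pauli t))\<^sup>2) = 2 ^ card K * hs_norm_sq K Ob"
proof -
  let ?Z = "qbasis K \<times> qbasis K"
  have fin: "finite ?Z" using K by (simp add: finite_qbasis)
  have delta: "(\<Prod>n\<in>K. \<Sum>j<4. 1 * (pauli j (snd z n) (fst z n) * cnj (pauli j (snd z' n) (fst z' n))))
      = 2 ^ card K * kdelta z' z" if "z \<in> ?Z" "z' \<in> ?Z" for z z'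
  proof -
    have "(\<Prod>n\<in>K. \<Sum>j<4. 1 * (pauli j (snd z n) (fst z n) * cnj (pauli j (snd z' n) (fst z' n))))
        = 2 ^ card K * (kdelta (snd z) (snd z') * kdelta (fst z) (fst z'))"
      using that by (simp add: pauli_completeness prod.distrib prod_kdelta[OF K] mem_Times_iff)
    then show ?thesis by (cases z; cases z') (simp add: kdelta_def)
  qed
  have "complex_of_real (\<Sum>t\<in>PiE K (\<lambda>_. {..<4}). (cmod (tensor_coeff K Ob pauli t))\<^sup>2)
      = (\<Sum>t\<in>PiE K (\<lambda>_. {..<4}). (\<Prod>n\<in>K. 1) * (tensor_coeff K Ob pauli t * cnj (tensor_coeff K Ob pauli t)))"
    by (simp only: of_real_sum complex_norm_square prod.neutral_const mult_1)
  also have "\<dots> = (\<Sum>z\<in>?Z. \<Sum>z'\<in>?Z. case_prod Ob z * cnj (case_prod Ob z') * (2 ^ card K * kdelta z' z))"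
    unfolding sum_weighted_tensor_coeff_sq[OF K finite_lessThan, where w = "\<lambda>_. 1"]
    by (intro sum.cong refl) (simp only: delta)
  also have "\<dots> = (\<Sum>z\<in>?Z. 2 ^ card K * complex_of_real ((cmod (case_prod Ob z))\<^sup>2))"
    unfolding complex_norm_square
    by (intro sum.cong refl) (simp only: mult.assoc[symmetric] sum_mult_kdelta[OF fin], simp add: mult_ac)
  also have "\<dots> = complex_of_real (2 ^ card K * hs_norm_sq K Ob)"
    unfolding hs_norm_sq_eq_sum by (simp add: sum_distrib_left)
  finally show ?thesis by (simp only: of_real_eq_iff)
qed

lemma sum_shadow_coeff_sq_le:
  assumes sic: "is_qubit_SIC \<psi>" and K: "finite K"
  shows "(\<Sum>t\<in>PiE K (\<lambda>_. {..<4}). (cmod (tensor_coeff K Ob (qubit_shadow \<psi>) t))\<^sup>2)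
       \<le> 6 ^ card K * hs_norm_sq K Ob"
proof -
  let ?T = "PiE K (\<lambda>_. {..<4::nat})"
  let ?G = "tensor_coeff K Ob pauli"
  have "complex_of_real (\<Sum>t\<in>?T. (cmod (tensor_coeff K Ob (qubit_shadow \<psi>) t))\<^sup>2)
      = (\<Sum>t\<in>?T. (\<Prod>n\<in>K. 1) * (tensor_coeff K Ob (qubit_shadow \<psi>) t * cnj (tensor_coeff K Ob (qubit_shadow \<psi>) t)))"
    by (simp only: of_real_sum complex_norm_square prod.neutral_const mult_1)
  also have "\<dots> = (\<Sum>t\<in>?T. (\<Prod>n\<in>K. complex_of_real (pauli_weight (t n))) * (?G t * cnj (?G t)))"
    by (rule sum_weighted_tensor_coeff_sq_eq[OF K finite_lessThan, where w = "\<lambda>_. 1"])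
      (simp add: qubit_shadow_correlation[OF sic])
  also have "\<dots> = complex_of_real (\<Sum>t\<in>?T. (\<Prod>n\<in>K. pauli_weight (t n)) * (cmod (?G t))\<^sup>2)"
    by (simp only: of_real_sum of_real_mult of_real_prod complex_norm_square)
  finally have "(\<Sum>t\<in>?T. (cmod (tensor_coeff K Ob (qubit_shadow \<psi>) t))\<^sup>2)
      = (\<Sum>t\<in>?T. (\<Prod>n\<in>K. pauli_weight (t n)) * (cmod (?G t))\<^sup>2)"
    by (simp only: of_real_eq_iff)
  also have "\<dots> \<le> (\<Sum>t\<in>?T. 3 ^ card K * (cmod (?G t))\<^sup>2)"
  proof (intro sum_mono mult_right_mono)
    fix t show "(\<Prod>n\<in>K. pauli_weight (t n)) \<le> 3 ^ card K"
      using prod_mono[of K "\<lambda>n. pauli_weight (t n)" "\<lambda>_. 3"] by (simp add: pauli_weight_def)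
  qed simp
  also have "\<dots> = 6 ^ card K * hs_norm_sq K Ob"
    by (simp add: sum_distrib_left[symmetric] pauli_parseval[OF K] power_mult_distrib[symmetric])
  finally show ?thesis .
qed

section \<open>Locality and the second moment\<close>

lemma prod_qmerge:
  assumes "finite I" "K \<subseteq> I"
  shows "(\<Prod>n\<in>I. g n (qmerge K a c n) (qmerge K a' c' n))
       = (\<Prod>n\<in>K. g n (a n) (a' n)) * (\<Prod>n\<in>I - K. g n (c n) (c' n))"
proof -
  have "(\<Prod>n\<in>I. g n (qmerge K a c n) (qmerge K a' c' n))
      = (\<Prod>n\<in>K. g n (qmerge K a c n) (qmerge K a' c' n)) * (\<Prod>n\<in>I - K. g n (qmerge K a c n) (qmerge K a' c' n))"
    using prod.subset_diff[OF assms(2,1)] by (simp add: mult.commute)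
  then show ?thesis unfolding qmerge_def by simp
qed

lemma extend_local_qmerge:
  assumes "a \<in> qbasis K" "a' \<in> qbasis K" "c \<in> qbasis ({0..<N} - K)" "c' \<in> qbasis ({0..<N} - K)"
  shows "extend_local N K Ob (qmerge K a c) (qmerge K a' c') = (if c = c' then Ob a a' else 0)"
  using qmerge_eq_iff[OF assms(3,4), of K a a']
  unfolding extend_local_def restrict_qmerge[OF assms(1)] restrict_qmerge[OF assms(2)] by auto

lemma trace_extend_local_prod:
  assumes K: "K \<subseteq> {0..<N}"
  shows "qtrace {0..<N} (qmult {0..<N} (extend_local N K Ob) (\<lambda>x y. \<Prod>n\<in>{0..<N}. A n (x n) (y n)))
       = qtrace K (qmult K Ob (\<lambda>x y. \<Prod>n\<in>K. A n (x n) (y n))) * (\<Prod>n\<in>{0..<N} - K. \<Sum>b\<in>UNIV. A n b b)"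
proof -
  let ?I = "{0..<N}" and ?R = "qbasis ({0..<N} - K)"
  have I: "finite ?I" "K \<subseteq> ?I" using K by auto
  define PK where "PK a a' = (\<Prod>n\<in>K. A n (a' n) (a n))" for a a' :: "nat \<Rightarrow> bool"
  define PR where "PR c c' = (\<Prod>n\<in>?I - K. A n (c' n) (c n))" for c c' :: "nat \<Rightarrow> bool"
  have collapse: "(\<Sum>c'\<in>?R. extend_local N K Ob (qmerge K a c) (qmerge K a' c') * (PK a a' * PR c c'))
      = Ob a a' * PK a a' * PR c c" if "a \<in> qbasis K" "a' \<in> qbasis K" "c \<in> ?R" for a a' c
  proof -
    have "(\<Sum>c'\<in>?R. extend_local N K Ob (qmerge K a c) (qmerge K a' c') * (PK a a' * PR c c'))
        = (\<Sum>c'\<in>?R. if c = c' then Ob a a' * PK a a' * PR c c' else 0)"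
      by (intro sum.cong refl) (simp add: extend_local_qmerge that)
    also have "\<dots> = Ob a a' * PK a a' * PR c c" using that by (simp add: finite_qbasis)
    finally show ?thesis .
  qed
  have "qtrace ?I (qmult ?I (extend_local N K Ob) (\<lambda>x y. \<Prod>n\<in>?I. A n (x n) (y n)))
      = (\<Sum>a\<in>qbasis K. \<Sum>c\<in>?R. \<Sum>a'\<in>qbasis K. \<Sum>c'\<in>?R.
           extend_local N K Ob (qmerge K a c) (qmerge K a' c') * (PK a a' * PR c c'))"
    unfolding qtrace_def qmult_def sum_qbasis_split[OF I] PK_def PR_def prod_qmerge[OF I] ..
  also have "\<dots> = (\<Sum>a\<in>qbasis K. \<Sum>c\<in>?R. \<Sum>a'\<in>qbasis K. Ob a a' * PK a a' * PR c c)"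
    by (intro sum.cong refl) (simp add: collapse)
  also have "\<dots> = (\<Sum>a\<in>qbasis K. \<Sum>a'\<in>qbasis K. Ob a a' * PK a a') * (\<Sum>c\<in>?R. PR c c)"
    unfolding sum_distrib_left sum_distrib_right by (rule sum.swap)
  also have "(\<Sum>c\<in>?R. PR c c) = (\<Prod>n\<in>?I - K. \<Sum>b\<in>UNIV. A n b b)"
    unfolding PR_def by (rule sum_qbasis_prod) simp
  finally show ?thesis unfolding qtrace_def qmult_def PK_def .
qed

lemma trace_extend_local_sic_shadow:
  assumes sic: "is_qubit_SIC \<psi>" and K: "K \<subseteq> {0..<N}" and s: "s \<in> outcome_strings N"
  shows "qtrace {0..<N} (qmult {0..<N} (extend_local N K Ob) (sic_shadow \<psi> N s))
       = tensor_coeff K Ob (qubit_shadow \<psi>) s"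
proof -
  have "sic_shadow \<psi> N s = (\<lambda>x y. \<Prod>n\<in>{0..<N}. qubit_shadow \<psi> (s n) (x n) (y n))"
    by (simp add: fun_eq_iff sic_shadow_eq_prod atLeast0LessThan)
  moreover have "(\<Prod>n\<in>{0..<N} - K. \<Sum>b\<in>UNIV. qubit_shadow \<psi> (s n) b b) = 1"
    using s by (intro prod.neutral ballI qubit_shadow_trace[OF sic]) (auto simp: outcome_strings_def)
  ultimately show ?thesis
    unfolding tensor_coeff_def using trace_extend_local_prod[OF K, of Ob "\<lambda>n. qubit_shadow \<psi> (s n)"] by simp
qed


text \<open>Completing \<open>\<psi>\<^bsub>t n\<^esub>\<close> by its orthogonal vector on the qubits of \<open>K\<close> and keeping the SIC
  frame elsewhere gives a family of product vectors resolving \<open>2\<^bsup>N - |K|\<^esup>\<close> times the identity;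
  the product vectors of the outcomes \<open>s\<close> with \<open>s|\<^sub>K = t\<close> are among them.\<close>

lemma outcome_marginal_le:
  assumes sic: "is_qubit_SIC \<psi>" and d: "density_matrix N \<rho>"
    and K: "K \<subseteq> {0..<N}" and t: "t \<in> PiE K (\<lambda>_. {..<4})"
  shows "(\<Sum>s\<in>{s\<in>outcome_strings N. restrict s K = t}. outcome_prob \<psi> N \<rho> s) \<le> 1 / 2 ^ card K"
proof -
  let ?F = "{s\<in>outcome_strings N. restrict s K = t}"
  define J where "J n = (if n \<in> K then {t n, 4} else {..<4::nat})" for n
  define u where "u n j = (if n \<in> K \<and> j = 4 then qubit_perp (\<psi> (t n)) else \<psi> j)" for n j
  define C where "C n = (if n \<in> K then 1 else 2 :: complex)" for n
  define v where "v c x = (\<Prod>n\<in>{..<N}. u n (c n) (x n))" for c x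
  have t4: "t n < 4" if "n \<in> K" for n using t that by auto
  have resolution: "(\<Sum>j\<in>J n. cnj (u n j a) * u n j b) = C n * kdelta a b" for n a b
  proof (cases "n \<in> K")
    case True
    then have "J n = {t n, 4}" "t n \<noteq> 4" using t4[OF True] by (auto simp: J_def)
    then have "(\<Sum>j\<in>J n. cnj (u n j a) * u n j b) = cnj (u n (t n) a) * u n (t n) b + cnj (u n 4 a) * u n 4 b"
      by simp
    also have "\<dots> = kdelta a b"
      using True \<open>t n \<noteq> 4\<close> qubit_perp_completeness[OF sic_unit_norm[OF sic t4[OF True]]]
      unfolding u_def by simp
    finally show ?thesis using True unfolding C_def by simp
  next
    case False
    then show ?thesis unfolding J_def u_def C_def by (simp add: sic_resolution'[OF sic])
  qed
  have psd: "psd_on {..<N} \<rho>" using d unfolding density_matrix_def atLeast0LessThan by blast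
  have fiber: "?F \<subseteq> PiE {..<N} J"
    using K by (auto simp: outcome_strings_PiE J_def PiE_iff extensional_def restrict_def fun_eq_iff split: if_splits)
  have fiber_vec: "product_vec \<psi> N s = v s" if "s \<in> ?F" for s
  proof -
    have s4: "s n \<noteq> 4" if "n < N" for n
      using PiE_mem[of s "{..<N}" "\<lambda>_. {..<4}" n] \<open>s \<in> ?F\<close> that by (auto simp: outcome_strings_PiE)
    show ?thesis unfolding product_vec_def v_def by (intro ext prod.cong refl) (simp add: u_def s4)
  qed
  have "(\<Prod>n\<in>{..<N}. C n) = 2 ^ (N - card K)"
    unfolding C_def using K finite_subset[OF K]
    by (simp add: prod.If_cases Diff_eq[symmetric] card_Diff_subset atLeast0LessThan)
  then have frame: "(\<Sum>c\<in>PiE {..<N} J. qform {..<N} \<rho> (v c)) = 2 ^ (N - card K)"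
    unfolding qform_def v_def
    by (subst sum_product_frame_expectation[OF _ _ resolution]) (auto simp: J_def density_matrix_trace[OF d])
  have "(\<Sum>s\<in>?F. outcome_prob \<psi> N \<rho> s) = (\<Sum>s\<in>?F. Re (qform {..<N} \<rho> (v s))) / 2 ^ N"
    unfolding outcome_prob_eq_qform atLeast0LessThan sum_divide_distrib by (simp add: fiber_vec)
  also have "\<dots> \<le> (\<Sum>c\<in>PiE {..<N} J. Re (qform {..<N} \<rho> (v c))) / 2 ^ N"
    by (intro divide_right_mono sum_mono2 fiber) (auto simp: J_def finite_PiE psd_on_qform(2)[OF psd])
  also have "\<dots> = 2 ^ (N - card K) / 2 ^ N"
    using arg_cong[OF frame, of Re] by simp
  also have "\<dots> = 1 / 2 ^ card K"
    using card_mono[OF _ K] by (simp add: power_diff)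
  finally show ?thesis .
qed

lemma shadow_coeff_second_moment:
  assumes sic: "is_qubit_SIC \<psi>" and d: "density_matrix N \<rho>" and K: "K \<subseteq> {0..<N}"
  shows "(\<Sum>s\<in>outcome_strings N. outcome_prob \<psi> N \<rho> s * (cmod (tensor_coeff K Ob (qubit_shadow \<psi>) s))\<^sup>2)
       \<le> 3 ^ card K * hs_norm_sq K Ob"
proof -
  let ?T = "PiE K (\<lambda>_. {..<4::nat})" and ?S = "outcome_strings N"
  define h where "h t = (cmod (tensor_coeff K Ob (qubit_shadow \<psi>) t))\<^sup>2" for t
  have fK: "finite K" using K finite_subset by blast
  have h_restrict: "h (restrict s K) = h s" for s
    unfolding h_def by (subst tensor_coeff_cong[of K s "restrict s K"]) auto
  have "(\<Sum>s\<in>?S. outcome_prob \<psi> N \<rho> s * h s)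
      = (\<Sum>t\<in>?T. \<Sum>s\<in>{s\<in>?S. restrict s K = t}. outcome_prob \<psi> N \<rho> s * h s)"
    by (rule sum.group[symmetric, OF finite_outcome_strings])
      (use K fK in \<open>auto simp: finite_PiE outcome_strings_def PiE_iff\<close>)
  also have "\<dots> = (\<Sum>t\<in>?T. h t * (\<Sum>s\<in>{s\<in>?S. restrict s K = t}. outcome_prob \<psi> N \<rho> s))"
    unfolding sum_distrib_left by (intro sum.cong refl) (auto simp: mult.commute h_restrict)
  also have "\<dots> \<le> (\<Sum>t\<in>?T. h t * (1 / 2 ^ card K))"
    by (intro sum_mono mult_left_mono outcome_marginal_le[OF sic d K]) (auto simp: h_def)
  also have "\<dots> \<le> 6 ^ card K * hs_norm_sq K Ob / 2 ^ card K"
    using sum_shadow_coeff_sq_le[OF sic fK, of Ob] unfolding h_def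
    by (simp add: sum_divide_distrib[symmetric] divide_right_mono)
  also have "\<dots> = 3 ^ card K * hs_norm_sq K Ob"
  proof -
    have "(6::real) ^ card K = 3 ^ card K * 2 ^ card K" by (simp add: power_mult_distrib[symmetric])
    then show ?thesis by simp
  qed
  finally show ?thesis unfolding h_def .
qed

section \<open>Bernstein's inequality for i.i.d. samples\<close>

definition finite_distribution :: "'s set \<Rightarrow> ('s \<Rightarrow> real) \<Rightarrow> bool" where
  "finite_distribution S p \<longleftrightarrow> finite S \<and> (\<forall>s\<in>S. 0 \<le> p s) \<and> sum p S = 1"

definition iid_prob :: "'s set \<Rightarrow> ('s \<Rightarrow> real) \<Rightarrow> nat \<Rightarrow> ((nat \<Rightarrow> 's) \<Rightarrow> bool) \<Rightarrow> real" where
  "iid_prob S p M E = (\<Sum>\<omega>\<in>{0..<M} \<rightarrow>\<^sub>E S. if E \<omega> then \<Prod>m<M. p (\<omega> m) else 0)"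

lemma iid_prob_cong:
  assumes "\<And>\<omega>. \<omega> \<in> {0..<M} \<rightarrow>\<^sub>E S \<Longrightarrow> E \<omega> \<longleftrightarrow> F \<omega>"
  shows "iid_prob S p M E = iid_prob S p M F"
  unfolding iid_prob_def using assms by (intro sum.cong) auto

lemma iid_prob_compl:
  assumes "finite_distribution S p"
  shows "iid_prob S p M (\<lambda>\<omega>. \<not> E \<omega>) = 1 - iid_prob S p M E"
proof -
  have "(\<Sum>\<omega>\<in>{0..<M} \<rightarrow>\<^sub>E S. \<Prod>m\<in>{0..<M}. p (\<omega> m)) = (\<Prod>m\<in>{0..<M}. \<Sum>s\<in>S. p s)"
    using assms unfolding finite_distribution_def by (intro prod_sum_PiE[symmetric]) auto
  also have "\<dots> = 1" using assms unfolding finite_distribution_def by simp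
  finally have "(\<Sum>\<omega>\<in>{0..<M} \<rightarrow>\<^sub>E S. \<Prod>m<M. p (\<omega> m)) = 1" by (simp add: atLeast0LessThan)
  moreover have "(\<Sum>\<omega>\<in>{0..<M} \<rightarrow>\<^sub>E S. if \<not> E \<omega> then \<Prod>m<M. p (\<omega> m) else 0)
      + (\<Sum>\<omega>\<in>{0..<M} \<rightarrow>\<^sub>E S. if E \<omega> then \<Prod>m<M. p (\<omega> m) else 0)
      = (\<Sum>\<omega>\<in>{0..<M} \<rightarrow>\<^sub>E S. \<Prod>m<M. p (\<omega> m))"
    by (subst sum.distrib[symmetric]) (rule sum.cong; simp)
  ultimately show ?thesis unfolding iid_prob_def by linarith
qed

lemma iid_prob_le_sum:
  assumes p: "finite_distribution S p" and I: "finite I"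
    and E: "\<And>\<omega>. \<omega> \<in> {0..<M} \<rightarrow>\<^sub>E S \<Longrightarrow> E \<omega> \<Longrightarrow> \<exists>i\<in>I. F i \<omega>"
  shows "iid_prob S p M E \<le> (\<Sum>i\<in>I. iid_prob S p M (F i))"
proof -
  have "(if E \<omega> then \<Prod>m<M. p (\<omega> m) else 0) \<le> (\<Sum>i\<in>I. if F i \<omega> then \<Prod>m<M. p (\<omega> m) else 0)"
    if \<omega>: "\<omega> \<in> {0..<M} \<rightarrow>\<^sub>E S" for \<omega>
  proof -
    have P: "0 \<le> (\<Prod>m<M. p (\<omega> m))"
      using p \<omega> unfolding finite_distribution_def by (auto intro!: prod_nonneg simp: PiE_iff)
    show ?thesis
    proof (cases "E \<omega>")
      case True
      then obtain i where i: "i \<in> I" "F i \<omega>" using E[OF \<omega>] by blast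
      have "(if F i \<omega> then \<Prod>m<M. p (\<omega> m) else 0) \<le> (\<Sum>i\<in>I. if F i \<omega> then \<Prod>m<M. p (\<omega> m) else 0)"
        by (rule member_le_sum) (use i P I in auto)
      then show ?thesis using True i by simp
    qed (use P in \<open>auto intro!: sum_nonneg\<close>)
  qed
  then show ?thesis
    unfolding iid_prob_def by (subst sum.swap) (rule sum_mono)
qed


lemma two_mult_three_pow_le_fact: "2 * 3 ^ n \<le> (fact (n + 2) :: real)"
proof (induction n)
  case (Suc n)
  have "(fact (Suc n + 2) :: real) = of_nat (n + 3) * fact (n + 2)"
    by (simp add: fact_Suc add.commute)
  moreover have "3 * (fact (n + 2) :: real) \<le> of_nat (n + 3) * fact (n + 2)"
    by (intro mult_right_mono) auto
  moreover have "3 * (2 * 3 ^ n) \<le> 3 * (fact (n + 2) :: real)" using Suc.IH by linarith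
  moreover have "(2 * 3 ^ Suc n :: real) = 3 * (2 * 3 ^ n)" by simp
  ultimately show ?case by linarith
qed simp

text \<open>Bounding the Taylor tail of \<open>exp\<close> by the geometric series \<open>z\<^sup>2/2 \<Sum>\<^sub>k (z/3)\<^sup>k\<close>, which
  \<open>z\<^sup>k / k! \<le> z\<^sup>2/2 (z/3)\<^bsup>k-2\<^esup>\<close> allows.\<close>

lemma exp_le_bernstein_nonneg:
  fixes z :: real
  assumes z0: "0 \<le> z" and z3: "z < 3"
  shows "exp z \<le> 1 + z + z\<^sup>2 / (2 * (1 - z / 3))"
proof -
  define c where "c n = z\<^sup>2 / 2 * (z / 3) ^ n" for n
  have cs: "c sums (z\<^sup>2 / 2 * (1 / (1 - z / 3)))"
    unfolding c_def by (rule sums_mult, rule geometric_sums) (use z0 z3 in simp)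
  define b where "b n = (if n < 2 then z ^ n / fact n else c (n - 2))" for n
  have "(\<lambda>n. b (n + 2)) = c" unfolding b_def by auto
  then have "(\<lambda>n. b (n + 2)) sums (z\<^sup>2 / 2 * (1 / (1 - z / 3)))" using cs by simp
  then have "b sums (z\<^sup>2 / 2 * (1 / (1 - z / 3)) + (\<Sum>i<2. b i))"
    by (simp only: sums_iff_shift)
  moreover have "(\<Sum>i<2. b i) = 1 + z" unfolding b_def by (simp add: numeral_2_eq_2)
  moreover have "(\<lambda>n. z ^ n / fact n) sums exp z"
    using exp_converges[of z] by (simp add: divide_inverse mult.commute)
  moreover have "z ^ n / fact n \<le> b n" for n
  proof (cases "n < 2")
    case False
    then obtain m where m: "n = m + 2" by (metis add.commute le_Suc_ex not_less)
    have "z ^ n / fact n \<le> z ^ n / (2 * 3 ^ m)"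
      by (rule divide_left_mono) (use z0 two_mult_three_pow_le_fact[of m] m in auto)
    also have "\<dots> = c m" unfolding c_def m by (simp add: power_add field_simps power2_eq_square)
    finally show ?thesis unfolding b_def using False m by simp
  qed (simp add: b_def)
  ultimately have "exp z \<le> z\<^sup>2 / 2 * (1 / (1 - z / 3)) + (1 + z)"
    using sums_le by metis
  then show ?thesis by (simp add: field_simps)
qed

lemma exp_le_quadratic_nonpos:
  fixes z :: real
  assumes "z \<le> 0"
  shows "exp z \<le> 1 + z + z\<^sup>2 / 2"
proof -
  define f where "f y = exp y - 1 - y - y\<^sup>2 / 2" for y :: real
  have "f z \<le> f 0"
  proof (rule DERIV_nonneg_imp_nondecreasing[OF assms])
    fix y :: real
    have "DERIV f y :> exp y - 1 - y"
      unfolding f_def by (auto intro!: derivative_eq_intros)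
    moreover have "exp y - 1 - y \<ge> 0" using exp_ge_add_one_self[of y] by linarith
    ultimately show "\<exists>d. DERIV f y :> d \<and> 0 \<le> d" by blast
  qed
  then show ?thesis unfolding f_def by simp
qed

lemma exp_le_bernstein:
  fixes z c :: real
  assumes zc: "z \<le> c" and c0: "0 \<le> c" and c3: "c < 3"
  shows "exp z \<le> 1 + z + z\<^sup>2 / (2 * (1 - c / 3))"
proof (cases "z \<le> 0")
  case True
  have "z\<^sup>2 / 2 \<le> z\<^sup>2 / (2 * (1 - c / 3))"
    by (rule divide_left_mono) (use c0 c3 in auto)
  then show ?thesis using exp_le_quadratic_nonpos[OF True] by linarith
next
  case False
  have "z\<^sup>2 / (2 * (1 - z / 3)) \<le> z\<^sup>2 / (2 * (1 - c / 3))"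
    by (rule divide_left_mono) (use zc c3 False in auto)
  then show ?thesis using exp_le_bernstein_nonneg[of z] False zc c3 by simp
qed

lemma bernstein_mgf_le:
  fixes p x :: "'s \<Rightarrow> real"
  assumes p: "finite_distribution S p" and xb: "\<And>s. s \<in> S \<Longrightarrow> x s \<le> b"
    and V: "(\<Sum>s\<in>S. p s * (x s)\<^sup>2) \<le> V" and t0: "0 \<le> t" and b0: "0 \<le> b" and tb: "t * b < 3"
  shows "(\<Sum>s\<in>S. p s * exp (t * x s)) \<le> exp (t * (\<Sum>s\<in>S. p s * x s) + t\<^sup>2 * V / (2 * (1 - t * b / 3)))"
proof -
  define D where "D = 2 * (1 - t * b / 3)"
  have tb': "b * t < 3" using tb by (subst mult.commute)
  have D0: "D > 0" unfolding D_def using tb tb' by simp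
  have "(\<Sum>s\<in>S. p s * exp (t * x s)) \<le> (\<Sum>s\<in>S. p s * (1 + t * x s + (t * x s)\<^sup>2 / D))"
  proof (rule sum_mono)
    fix s assume s: "s \<in> S"
    have "exp (t * x s) \<le> 1 + t * x s + (t * x s)\<^sup>2 / D"
      unfolding D_def using xb[OF s] t0 b0 tb tb'
      by (intro exp_le_bernstein) (auto intro: mult_left_mono)
    then show "p s * exp (t * x s) \<le> p s * (1 + t * x s + (t * x s)\<^sup>2 / D)"
      using p s unfolding finite_distribution_def by (simp add: mult_left_mono)
  qed
  also have "\<dots> = 1 + t * (\<Sum>s\<in>S. p s * x s) + t\<^sup>2 / D * (\<Sum>s\<in>S. p s * (x s)\<^sup>2)"
    using p unfolding finite_distribution_def
    by (simp add: sum.distrib sum_distrib_left algebra_simps)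
  also have "\<dots> \<le> 1 + t * (\<Sum>s\<in>S. p s * x s) + t\<^sup>2 * V / D"
    using mult_left_mono[OF V, of "t\<^sup>2 / D"] D0 by simp
  also have "\<dots> \<le> exp (t * (\<Sum>s\<in>S. p s * x s) + t\<^sup>2 * V / D)"
    using exp_ge_add_one_self[of "t * (\<Sum>s\<in>S. p s * x s) + t\<^sup>2 * V / D"] by linarith
  finally show ?thesis unfolding D_def .
qed


lemma chernoff_bound:
  assumes p: "finite_distribution S p" and t: "0 \<le> t"
  shows "iid_prob S p M (\<lambda>\<omega>. a \<le> (\<Sum>m<M. x (\<omega> m)))
       \<le> exp (- t * a) * (\<Sum>s\<in>S. p s * exp (t * x s)) ^ M"
proof -
  define g where "g s = p s * exp (t * x s)" for s
  have pointwise: "(if a \<le> (\<Sum>m<M. x (\<omega> m)) then \<Prod>m<M. p (\<omega> m) else 0)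
      \<le> exp (- t * a) * (\<Prod>m\<in>{0..<M}. g (\<omega> m))" if \<omega>: "\<omega> \<in> {0..<M} \<rightarrow>\<^sub>E S" for \<omega>
  proof -
    have P: "0 \<le> (\<Prod>m<M. p (\<omega> m))"
      using p \<omega> unfolding finite_distribution_def by (auto intro!: prod_nonneg simp: PiE_iff)
    have "exp (- t * a) * (\<Prod>m\<in>{0..<M}. g (\<omega> m))
        = (\<Prod>m<M. p (\<omega> m)) * exp (t * ((\<Sum>m<M. x (\<omega> m)) - a))"
      unfolding g_def atLeast0LessThan prod.distrib
      by (simp add: exp_sum[symmetric] sum_distrib_left[symmetric] right_diff_distrib exp_diff exp_minus field_simps)
    moreover have "1 \<le> exp (t * ((\<Sum>m<M. x (\<omega> m)) - a))" if "a \<le> (\<Sum>m<M. x (\<omega> m))"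
      using that t by simp
    ultimately show ?thesis using P by (auto simp: mult_le_cancel_left1)
  qed
  have "iid_prob S p M (\<lambda>\<omega>. a \<le> (\<Sum>m<M. x (\<omega> m)))
      \<le> exp (- t * a) * (\<Sum>\<omega>\<in>{0..<M} \<rightarrow>\<^sub>E S. \<Prod>m\<in>{0..<M}. g (\<omega> m))"
    unfolding iid_prob_def sum_distrib_left by (rule sum_mono) (rule pointwise)
  also have "(\<Sum>\<omega>\<in>{0..<M} \<rightarrow>\<^sub>E S. \<Prod>m\<in>{0..<M}. g (\<omega> m)) = (\<Prod>m\<in>{0..<M}. \<Sum>s\<in>S. g s)"
    using p unfolding finite_distribution_def by (intro prod_sum_PiE[symmetric]) auto
  also have "\<dots> = (\<Sum>s\<in>S. g s) ^ M" by simp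
  finally show ?thesis unfolding g_def .
qed

lemma bernstein_exponent:
  fixes V b \<epsilon> :: real
  assumes V: "0 < V" and b: "0 \<le> b" and \<epsilon>: "0 < \<epsilon>"
  defines "t \<equiv> \<epsilon> / (V + b * \<epsilon> / 3)"
  shows "- t * \<epsilon> + t\<^sup>2 * V / (2 * (1 - t * b / 3)) = - (\<epsilon>\<^sup>2 / (2 * (V + b * \<epsilon> / 3)))"
    and "t * b < 3" and "0 \<le> t"
proof -
  define D where "D = V + b * \<epsilon> / 3"
  have D: "0 < D" "3 * D = 3 * V + b * \<epsilon>"
    unfolding D_def using V b \<epsilon> by (simp_all add: add_pos_nonneg)
  have "V * (D * 3) = V * (\<epsilon> * b + V * 3)" using D(2) by (simp add: mult.commute)
  then have one_minus: "1 - t * b / 3 = V / D"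
    unfolding t_def D_def[symmetric] using D by (simp add: field_simps)
  have t2: "t\<^sup>2 * V / (2 * (1 - t * b / 3)) = \<epsilon>\<^sup>2 / (2 * D)"
    unfolding one_minus unfolding t_def D_def[symmetric] using D V by (simp add: field_simps power2_eq_square)
  show "- t * \<epsilon> + t\<^sup>2 * V / (2 * (1 - t * b / 3)) = - (\<epsilon>\<^sup>2 / (2 * (V + b * \<epsilon> / 3)))"
    unfolding t2 unfolding t_def D_def[symmetric] using D by (simp add: field_simps power2_eq_square)
  show "t * b < 3" unfolding t_def D_def[symmetric] using D V by (simp add: field_simps)
  show "0 \<le> t" unfolding t_def D_def[symmetric] using D \<epsilon> by simp
qed

lemma bernstein_upper_tail:
  assumes p: "finite_distribution S p" and xb: "\<And>s. s \<in> S \<Longrightarrow> x s \<le> b"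
    and V: "(\<Sum>s\<in>S. p s * (x s)\<^sup>2) \<le> V" and V0: "0 < V" and b0: "0 \<le> b" and \<epsilon>: "0 < \<epsilon>"
  shows "iid_prob S p M (\<lambda>\<omega>. real M * ((\<Sum>s\<in>S. p s * x s) + \<epsilon>) \<le> (\<Sum>m<M. x (\<omega> m)))
       \<le> exp (- (real M * \<epsilon>\<^sup>2 / (2 * (V + b * \<epsilon> / 3))))"
proof -
  define \<mu> where "\<mu> = (\<Sum>s\<in>S. p s * x s)"
  define t where "t = \<epsilon> / (V + b * \<epsilon> / 3)"
  note t = bernstein_exponent[OF V0 b0 \<epsilon>, folded t_def]
  have mgf: "(\<Sum>s\<in>S. p s * exp (t * x s)) \<le> exp (t * \<mu> + t\<^sup>2 * V / (2 * (1 - t * b / 3)))"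
    unfolding \<mu>_def by (rule bernstein_mgf_le[OF p xb V t(3) b0 t(2)])
  have "iid_prob S p M (\<lambda>\<omega>. real M * (\<mu> + \<epsilon>) \<le> (\<Sum>m<M. x (\<omega> m)))
      \<le> exp (- t * (real M * (\<mu> + \<epsilon>))) * (\<Sum>s\<in>S. p s * exp (t * x s)) ^ M"
    by (rule chernoff_bound[OF p t(3)])
  also have "\<dots> \<le> exp (- t * (real M * (\<mu> + \<epsilon>))) * exp (t * \<mu> + t\<^sup>2 * V / (2 * (1 - t * b / 3))) ^ M"
    using p mgf unfolding finite_distribution_def
    by (intro mult_left_mono power_mono) (auto intro!: sum_nonneg)
  also have "\<dots> = exp (real M * (- t * \<epsilon> + t\<^sup>2 * V / (2 * (1 - t * b / 3))))"
    by (simp add: exp_of_nat_mult[symmetric] exp_add[symmetric] algebra_simps)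
  also have "\<dots> = exp (- (real M * \<epsilon>\<^sup>2 / (2 * (V + b * \<epsilon> / 3))))"
    unfolding t(1) by simp
  finally show ?thesis unfolding \<mu>_def .
qed

lemma bernstein_two_sided:
  assumes p: "finite_distribution S p" and xb: "\<And>s. s \<in> S \<Longrightarrow> \<bar>x s\<bar> \<le> b"
    and V: "(\<Sum>s\<in>S. p s * (x s)\<^sup>2) \<le> V" and V0: "0 < V" and b0: "0 \<le> b"
    and \<epsilon>: "0 < \<epsilon>" and M: "0 < M"
  shows "iid_prob S p M (\<lambda>\<omega>. \<epsilon> < \<bar>(\<Sum>m<M. x (\<omega> m)) / real M - (\<Sum>s\<in>S. p s * x s)\<bar>)
       \<le> 2 * exp (- (real M * \<epsilon>\<^sup>2 / (2 * (V + b * \<epsilon> / 3))))"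
proof -
  let ?\<mu> = "\<Sum>s\<in>S. p s * x s"
  let ?U = "\<lambda>\<sigma> \<omega>. real M * ((\<Sum>s\<in>S. p s * (\<sigma> * x s)) + \<epsilon>) \<le> (\<Sum>m<M. \<sigma> * x (\<omega> m))"
  have "iid_prob S p M (\<lambda>\<omega>. \<epsilon> < \<bar>(\<Sum>m<M. x (\<omega> m)) / real M - ?\<mu>\<bar>)
      \<le> (\<Sum>\<sigma>\<in>{1, -1}. iid_prob S p M (?U \<sigma>))"
  proof (rule iid_prob_le_sum[OF p])
    fix \<omega> assume gt: "\<epsilon> < \<bar>(\<Sum>m<M. x (\<omega> m)) / real M - ?\<mu>\<bar>"
    define X where "X = (\<Sum>m<M. x (\<omega> m))"
    define d where "d = X / real M - ?\<mu>"
    have X: "X = real M * ?\<mu> + real M * d" using M unfolding d_def by (simp add: algebra_simps)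
    have "\<epsilon> < \<bar>d\<bar>" using gt unfolding d_def X_def .
    then have "\<epsilon> < d \<or> \<epsilon> < - d" by arith
    then have "real M * \<epsilon> \<le> real M * d \<or> real M * \<epsilon> \<le> real M * (- d)"
      by (meson less_imp_le mult_left_mono of_nat_0_le_iff)
    then have "real M * (?\<mu> + \<epsilon>) \<le> X \<or> real M * (- ?\<mu> + \<epsilon>) \<le> - X"
      unfolding X by (auto simp: algebra_simps)
    then show "\<exists>\<sigma>\<in>{1, -1}. ?U \<sigma> \<omega>"
      unfolding X_def by (auto simp: sum_negf)
  qed simp
  also have "\<dots> \<le> (\<Sum>\<sigma>\<in>{1 :: real, -1}. exp (- (real M * \<epsilon>\<^sup>2 / (2 * (V + b * \<epsilon> / 3)))))"
  proof (rule sum_mono)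
    fix \<sigma> :: real assume "\<sigma> \<in> {1, -1}"
    then have "\<sigma> * x s \<le> b" and "(\<sigma> * x s)\<^sup>2 = (x s)\<^sup>2" if "s \<in> S" for s
      using xb[OF that] by auto
    then show "iid_prob S p M (?U \<sigma>) \<le> exp (- (real M * \<epsilon>\<^sup>2 / (2 * (V + b * \<epsilon> / 3))))"
      using V by (intro bernstein_upper_tail[OF p _ _ V0 b0 \<epsilon>]) auto
  qed
  also have "\<dots> = 2 * exp (- (real M * \<epsilon>\<^sup>2 / (2 * (V + b * \<epsilon> / 3))))" by simp
  finally show ?thesis .
qed

section \<open>Sample complexity\<close>

lemma shadows_prob_eq_iid_prob:
  "shadows_prob \<psi> N \<rho> M E = iid_prob (outcome_strings N) (outcome_prob \<psi> N \<rho>) M E"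
  unfolding shadows_prob_def iid_prob_def ..

lemma finite_distribution_outcome_prob:
  "is_qubit_SIC \<psi> \<Longrightarrow> density_matrix N \<rho> \<Longrightarrow> finite_distribution (outcome_strings N) (outcome_prob \<psi> N \<rho>)"
  by (simp add: finite_distribution_def finite_outcome_strings outcome_prob_nonneg outcome_prob_sum)

lemma shadow_coeff_real:
  assumes "hermitian_on K Ob"
  shows "tensor_coeff K Ob (qubit_shadow \<psi>) s = complex_of_real (Re (tensor_coeff K Ob (qubit_shadow \<psi>) s))"
proof -
  have "cnj (tensor_coeff K Ob (qubit_shadow \<psi>) s) = tensor_coeff K Ob (qubit_shadow \<psi>) s"
    by (rule cnj_tensor_coeff[OF assms]) (rule cnj_qubit_shadow)
  then show ?thesis by (simp add: complex_eq_iff)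
qed

text \<open>Under this hypothesis the almost-sure bound \<open>\<surd>(5\<^bsup>|K|\<^esup> tr O\<^sup>2)\<close> does not exceed the
  second-moment bound \<open>3\<^bsup>|K|\<^esup> tr O\<^sup>2\<close>, so a single parameter serves both in Bernstein's
  inequality.\<close>

lemma norm_shadow_coeff_le:
  assumes sic: "is_qubit_SIC \<psi>" and K: "finite K" and t: "\<And>n. n \<in> K \<Longrightarrow> t n < 4"
    and large: "(5/9) ^ card K \<le> hs_norm_sq K Ob"
  shows "cmod (tensor_coeff K Ob (qubit_shadow \<psi>) t) \<le> 3 ^ card K * hs_norm_sq K Ob"
proof (rule power2_le_imp_le)
  have hs: "0 < hs_norm_sq K Ob" using large by (rule order.strict_trans2[rotated]) simp
  have "(5::real) ^ card K = 9 ^ card K * (5/9) ^ card K" by (simp add: power_mult_distrib[symmetric])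
  also have "\<dots> \<le> 9 ^ card K * hs_norm_sq K Ob" using large by simp
  finally have five: "(5::real) ^ card K \<le> 9 ^ card K * hs_norm_sq K Ob" .
  from five have "5 ^ card K * hs_norm_sq K Ob \<le> 9 ^ card K * hs_norm_sq K Ob * hs_norm_sq K Ob"
    using hs by (simp add: mult_right_mono)
  also have "\<dots> = (3 ^ card K * hs_norm_sq K Ob)\<^sup>2"
    by (simp add: power2_eq_square mult_ac flip: power_mult_distrib)
  finally have "5 ^ card K * hs_norm_sq K Ob \<le> (3 ^ card K * hs_norm_sq K Ob)\<^sup>2" .
  then show "(cmod (tensor_coeff K Ob (qubit_shadow \<psi>) t))\<^sup>2 \<le> (3 ^ card K * hs_norm_sq K Ob)\<^sup>2"
    using norm_shadow_coeff_sq_le[where t = t and Ob = Ob, OF sic K t] by linarith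
  show "0 \<le> 3 ^ card K * hs_norm_sq K Ob" using hs by simp
qed

lemma sic_shadow_estimate_tail:
  assumes sic: "is_qubit_SIC \<psi>" and d: "density_matrix N \<rho>"
    and K: "K \<subseteq> {0..<N}" and herm: "hermitian_on K Ob"
    and large: "(5/9) ^ card K \<le> Re (qtrace K (qmult K Ob Ob))" and \<epsilon>: "0 < \<epsilon>" and M: "0 < M"
  shows "shadows_prob \<psi> N \<rho> M (\<lambda>\<omega>. \<epsilon> < cmod ((\<Sum>m<M. qtrace {0..<N}
             (qmult {0..<N} (extend_local N K Ob) (sic_shadow \<psi> N (\<omega> m)))) / of_nat M
           - qtrace {0..<N} (qmult {0..<N} (extend_local N K Ob) \<rho>)))
     \<le> 2 * exp (- (real M * \<epsilon>\<^sup>2 / (2 * (3 ^ card K * Re (qtrace K (qmult K Ob Ob))) * (1 + \<epsilon> / 3))))"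
proof -
  let ?S = "outcome_strings N" and ?p = "outcome_prob \<psi> N \<rho>"
  let ?tr = "\<lambda>A. qtrace {0..<N} (qmult {0..<N} (extend_local N K Ob) A)"
  define B where "B = 3 ^ card K * hs_norm_sq K Ob"
  define x where "x s = Re (tensor_coeff K Ob (qubit_shadow \<psi>) s)" for s
  have fK: "finite K" using K finite_subset by blast
  have hs: "Re (qtrace K (qmult K Ob Ob)) = hs_norm_sq K Ob" by (rule hermitian_trace_square[OF herm])
  have B0: "0 < B" unfolding B_def using large hs by (simp add: order.strict_trans2[rotated])
  have coeff_real: "tensor_coeff K Ob (qubit_shadow \<psi>) s = complex_of_real (x s)" for s
    unfolding x_def by (rule shadow_coeff_real[OF herm])
  have trace_shadow: "?tr (sic_shadow \<psi> N s) = complex_of_real (x s)" if "s \<in> ?S" for s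
    using trace_extend_local_sic_shadow[OF sic K that] coeff_real by simp
  have mean: "?tr \<rho> = complex_of_real (\<Sum>s\<in>?S. ?p s * x s)"
    unfolding sic_shadow_unbiased[OF sic d, symmetric] by (simp add: trace_shadow cong: sum.cong)
  have event: "\<epsilon> < cmod ((\<Sum>m<M. ?tr (sic_shadow \<psi> N (\<omega> m))) / of_nat M - ?tr \<rho>)
      \<longleftrightarrow> \<epsilon> < \<bar>(\<Sum>m<M. x (\<omega> m)) / real M - (\<Sum>s\<in>?S. ?p s * x s)\<bar>"
    if "\<omega> \<in> {0..<M} \<rightarrow>\<^sub>E ?S" for \<omega>
  proof -
    have "(\<Sum>m<M. ?tr (sic_shadow \<psi> N (\<omega> m))) = complex_of_real (\<Sum>m<M. x (\<omega> m))"
      unfolding of_real_sum using that by (intro sum.cong refl trace_shadow) auto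
    then have "(\<Sum>m<M. ?tr (sic_shadow \<psi> N (\<omega> m))) / of_nat M - ?tr \<rho>
        = complex_of_real ((\<Sum>m<M. x (\<omega> m)) / real M - (\<Sum>s\<in>?S. ?p s * x s))"
      unfolding mean by simp
    then show ?thesis by (simp only: norm_of_real)
  qed
  have xb: "\<bar>x s\<bar> \<le> B" if "s \<in> ?S" for s
    using abs_Re_le_cmod[of "tensor_coeff K Ob (qubit_shadow \<psi>) s"] that K
      norm_shadow_coeff_le[OF sic fK _ large[unfolded hs], of s]
    unfolding x_def B_def by (force simp: outcome_strings_def)
  have V: "(\<Sum>s\<in>?S. ?p s * (x s)\<^sup>2) \<le> B"
    using shadow_coeff_second_moment[OF sic d K, of Ob] unfolding B_def coeff_real by simp
  have "shadows_prob \<psi> N \<rho> M (\<lambda>\<omega>. \<epsilon> < cmod ((\<Sum>m<M. ?tr (sic_shadow \<psi> N (\<omega> m))) / of_nat M - ?tr \<rho>))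
      = iid_prob ?S ?p M (\<lambda>\<omega>. \<epsilon> < \<bar>(\<Sum>m<M. x (\<omega> m)) / real M - (\<Sum>s\<in>?S. ?p s * x s)\<bar>)"
    unfolding shadows_prob_eq_iid_prob by (rule iid_prob_cong) (rule event)
  also have "\<dots> \<le> 2 * exp (- (real M * \<epsilon>\<^sup>2 / (2 * (B + B * \<epsilon> / 3))))"
    by (rule bernstein_two_sided[OF finite_distribution_outcome_prob[OF sic d] xb V B0 _ \<epsilon> M])
      (use B0 in auto)
  also have "2 * (B + B * \<epsilon> / 3) = 2 * (3 ^ card K * Re (qtrace K (qmult K Ob Ob))) * (1 + \<epsilon> / 3)"
    unfolding B_def hs by (simp add: algebra_simps)
  finally show ?thesis .
qed

lemma sample_size_tail_le:
  fixes M Q c \<epsilon> \<delta> :: real and L :: nat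
  assumes c: "0 < c" "c \<le> Q" and \<delta>: "0 < \<delta>" "\<delta> < 1" and L: "1 \<le> L" and \<epsilon>: "\<epsilon> \<noteq> 0"
    and M: "Q * ln (2 * real L / \<delta>) / \<epsilon>\<^sup>2 \<le> M"
  shows "2 * exp (- (M * \<epsilon>\<^sup>2 / c)) \<le> \<delta> / real L"
proof -
  have L2: "0 < 2 * real L / \<delta>" using L \<delta> by simp
  have "0 < ln (2 * real L / \<delta>)" using L \<delta> by (intro ln_gt_zero) (simp add: field_simps)
  then have "c * ln (2 * real L / \<delta>) \<le> M * \<epsilon>\<^sup>2"
    using c M \<epsilon> by (simp add: field_simps) (smt (verit) mult_right_mono)
  then have "- (M * \<epsilon>\<^sup>2 / c) \<le> - ln (2 * real L / \<delta>)" using c by (simp add: field_simps)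
  then have "exp (- (M * \<epsilon>\<^sup>2 / c)) \<le> exp (- ln (2 * real L / \<delta>))" by simp
  also have "\<dots> = \<delta> / (2 * real L)" using L2 by (simp add: exp_minus)
  finally show ?thesis by simp
qed


lemma iid_prob_union_bound:
  assumes p: "finite_distribution S p" and L: "0 < L"
    and tail: "\<And>l. l < L \<Longrightarrow> iid_prob S p M (\<lambda>\<omega>. \<not> G l \<omega>) \<le> \<delta> / real L"
  shows "1 - \<delta> \<le> iid_prob S p M (\<lambda>\<omega>. \<forall>l<L. G l \<omega>)"
proof -
  have "iid_prob S p M (\<lambda>\<omega>. \<not> (\<forall>l<L. G l \<omega>)) \<le> (\<Sum>l<L. iid_prob S p M (\<lambda>\<omega>. \<not> G l \<omega>))"
    by (rule iid_prob_le_sum[OF p]) auto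
  also have "\<dots> \<le> (\<Sum>l<L. \<delta> / real L)" by (rule sum_mono) (simp add: tail)
  also have "\<dots> = \<delta>" using L by simp
  finally show ?thesis using iid_prob_compl[OF p, where E = "\<lambda>\<omega>. \<forall>l<L. G l \<omega>" and M = M] by linarith
qed

lemma bernstein_denominator_le:
  fixes tr T \<epsilon> :: real
  assumes "k \<le> K" "0 \<le> tr" "tr \<le> T" "0 \<le> \<epsilon>" "\<epsilon> < 1"
  shows "2 * (3 ^ k * tr) * (1 + \<epsilon> / 3) \<le> 8/3 * 3 ^ K * T"
proof -
  have "3 ^ k * tr \<le> 3 ^ K * T" using assms by (intro mult_mono power_increasing) auto
  then have "2 * (3 ^ k * tr) * (1 + \<epsilon> / 3) \<le> 2 * (3 ^ K * T) * (4 / 3)"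
    using assms by (intro mult_mono) auto
  then show ?thesis by simp
qed

lemma sic_shadow_estimate_tail_le:
  assumes sic: "is_qubit_SIC \<psi>" and d: "density_matrix N \<rho>"
    and K: "K \<subseteq> {0..<N}" "card K \<le> k" and herm: "hermitian_on K Ob"
    and tr: "(5/9) ^ card K \<le> Re (qtrace K (qmult K Ob Ob))" "Re (qtrace K (qmult K Ob Ob)) \<le> T"
    and \<epsilon>: "0 < \<epsilon>" "\<epsilon> < 1" and \<delta>: "0 < \<delta>" "\<delta> < 1" and L: "1 \<le> L"
    and M: "8/3 * 3 ^ k * T * ln (2 * real L / \<delta>) / \<epsilon>\<^sup>2 \<le> real M"
  shows "shadows_prob \<psi> N \<rho> M (\<lambda>\<omega>. \<not> cmod ((\<Sum>m<M. qtrace {0..<N}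
             (qmult {0..<N} (extend_local N K Ob) (sic_shadow \<psi> N (\<omega> m)))) / of_nat M
           - qtrace {0..<N} (qmult {0..<N} (extend_local N K Ob) \<rho>)) \<le> \<epsilon>)
     \<le> \<delta> / real L"
proof -
  define c where "c = 2 * (3 ^ card K * Re (qtrace K (qmult K Ob Ob))) * (1 + \<epsilon> / 3)"
  have "0 < Re (qtrace K (qmult K Ob Ob))" using tr(1) by (rule order.strict_trans2[rotated]) simp
  then have c: "0 < c" "c \<le> 8/3 * 3 ^ k * T"
    unfolding c_def using K tr \<epsilon> by (simp, intro bernstein_denominator_le) auto
  have "0 < ln (2 * real L / \<delta>)" using L \<delta> by (intro ln_gt_zero) (simp add: field_simps)
  then have "0 < M" using M c \<epsilon> by (smt (verit) divide_pos_pos mult_pos_pos of_nat_0_less_iff zero_less_power)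
  then show ?thesis
    unfolding not_le using sic_shadow_estimate_tail[OF sic d K(1) herm tr(1) \<epsilon>(1)]
      sample_size_tail_le[OF c \<delta> L _ M] \<epsilon> unfolding c_def by (auto intro: order_trans)
qed

theorem mainTheorem2:
  fixes N L K M :: nat and \<rho> :: qop and \<psi> :: "nat \<Rightarrow> bool \<Rightarrow> complex"
    and OK :: "nat \<Rightarrow> qop" and Ks :: "nat \<Rightarrow> nat set" and \<epsilon> \<delta> :: real
  assumes sic: "is_qubit_SIC \<psi>"
    and rho: "density_matrix N \<rho>"
    and L: "L \<ge> 1"
    and loc: "\<forall>l<L. Ks l \<subseteq> {0..<N} \<and> card (Ks l) \<le> K \<and> hermitian_on (Ks l) (OK l)"
    and tr2: "\<forall>l<L. Re (qtrace (Ks l) (qmult (Ks l) (OK l) (OK l))) \<ge> (5/9) ^ card (Ks l)"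
    and eps: "0 < \<epsilon>" "\<epsilon> < 1"
    and del: "0 < \<delta>" "\<delta> < 1"
    and M: "real M \<ge> 8/3 * 3 ^ K
              * (MAX l\<in>{0..<L}. Re (qtrace (Ks l) (qmult (Ks l) (OK l) (OK l))))
              * ln (2 * real L / \<delta>) / \<epsilon>\<^sup>2"
  shows "shadows_prob \<psi> N \<rho> M
           (\<lambda>\<omega>. \<forall>l<L. cmod ((\<Sum>m<M. qtrace {0..<N}
                     (qmult {0..<N} (extend_local N (Ks l) (OK l)) (sic_shadow \<psi> N (\<omega> m)))) / of_nat M
                   - qtrace {0..<N} (qmult {0..<N} (extend_local N (Ks l) (OK l)) \<rho>)) \<le> \<epsilon>)
         \<ge> 1 - \<delta>"
proof -
  have "1 - \<delta> \<le> iid_prob (outcome_strings N) (outcome_prob \<psi> N \<rho>) M (\<lambda>\<omega>. \<forall>l<L.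
          cmod ((\<Sum>m<M. qtrace {0..<N} (qmult {0..<N} (extend_local N (Ks l) (OK l)) (sic_shadow \<psi> N (\<omega> m))))
            / of_nat M - qtrace {0..<N} (qmult {0..<N} (extend_local N (Ks l) (OK l)) \<rho>)) \<le> \<epsilon>)"
  proof (rule iid_prob_union_bound[OF finite_distribution_outcome_prob[OF sic rho]])
    fix l assume l: "l < L"
    have "Re (qtrace (Ks l) (qmult (Ks l) (OK l) (OK l)))
        \<le> (MAX l\<in>{0..<L}. Re (qtrace (Ks l) (qmult (Ks l) (OK l) (OK l))))"
      using l by (intro Max_ge) auto
    then show "iid_prob (outcome_strings N) (outcome_prob \<psi> N \<rho>) M (\<lambda>\<omega>. \<not> cmod
        ((\<Sum>m<M. qtrace {0..<N} (qmult {0..<N} (extend_local N (Ks l) (OK l)) (sic_shadow \<psi> N (\<omega> m))))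
          / of_nat M - qtrace {0..<N} (qmult {0..<N} (extend_local N (Ks l) (OK l)) \<rho>)) \<le> \<epsilon>)
        \<le> \<delta> / real L"
      using sic_shadow_estimate_tail_le[OF sic rho _ _ _ _ _ eps del L M] loc tr2 l
      unfolding shadows_prob_eq_iid_prob by blast
  qed (use L in simp)
  then show ?thesis unfolding shadows_prob_eq_iid_prob .
qed

end
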